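(* Let $G=(V,E)$ be a finite rectangle in $\mathbb Z^2$ with no additional edges ($E_A=\emptyset$), and let $x\in\mathbb C^E$. Then \[ \|\Lambda(x)\|\le(\sqrt2+1)\,\|x\|_\infty\quad\text{and}\quad |f_r(x)|\le 2|V|\,r^{-1}(\sqrt2+1)^r\|x\|_\infty^r\ \text{ for all } r\ge1, \] where $\|\cdot\|$ is the operator norm induced by the Euclidean norm and $\|x\|_\infty=\max_e|x_e|$.
   Context: A finite rectangle in $\mathbb Z^2$ is the graph whose vertex set consists of all points of $\mathbb Z^2$ in a rectangle $[a,b]\times[c,d]$ and whose edges join vertices at $L^1$-distance $1$, with its standard embedding. Loops in $G$: a path $(v_0,\dots,v_{n-1})$ has consecutive vertices adjacent and $v_{i+2}\ne v_i$; closed if all rotations are paths; a loop is a closed path lexicographically smallest among rotations of itself and its reversal. $m(\ell)$ = number of steps / smallest period; winding angle $\alpha(\ell)$ = sum over $i$ (mod $n$) of turning angles in $(-\pi,\pi)$ from $v_{i+1}-v_i$ to $v_{i+2}-v_{i+1}$; $\operatorname{sgn}(\ell)=-e^{i\alpha(\ell)/2}$; $w(\ell;x)=\frac{\operatorname{sgn}(\ell)}{m(\ell)}\prod_i x_{v_iv_{i+1}}$. With no additional edges the length of a loop is its number of steps, and $f_r(x)=\sum_{\ell \text{ of } r \text{ steps}}w(\ell;x)$. $\Lambda(x)$ is the matrix indexed by directed edges of $G$ with $\Lambda_{\vec{uv},\vec{vz}}(x)=x_{uv}e^{i\angle(v-u,z-v)/2}$ when $z\neq u$ ($\angle$ the turning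 angle in $(-\pi,\pi)$), and all other entries $0$. *)

theory Defs
  imports "HOL-Analysis.Analysis"
begin

type_synonym vert = "int \<times> int"

definition rectV :: "int \<Rightarrow> int \<Rightarrow> int \<Rightarrow> int \<Rightarrow> vert set" where
  "rectV a b c d = {(i, j). a \<le> i \<and> i \<le> b \<and> c \<le> j \<and> j \<le> d}"

definition radj :: "int \<Rightarrow> int \<Rightarrow> int \<Rightarrow> int \<Rightarrow> vert \<Rightarrow> vert \<Rightarrow> bool" where
  "radj a b c d u v \<longleftrightarrow> u \<in> rectV a b c d \<and> v \<in> rectV a b c d \<and>
     \<bar>fst u - fst v\<bar> + \<bar>snd u - snd v\<bar> = 1"

text \<open>Undirected edges are represented as two-element vertex sets {u,v};
  edge weights x are functions on such sets, x_{uv} = x {u,v}.\<close>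
definition rectE :: "int \<Rightarrow> int \<Rightarrow> int \<Rightarrow> int \<Rightarrow> vert set set" where
  "rectE a b c d = {{u, v} | u v. radj a b c d u v}"

definition rectD :: "int \<Rightarrow> int \<Rightarrow> int \<Rightarrow> int \<Rightarrow> (vert \<times> vert) set" where
  "rectD a b c d = {(u, v). radj a b c d u v}"

definition supnorm :: "vert set set \<Rightarrow> (vert set \<Rightarrow> complex) \<Rightarrow> real" where
  "supnorm E x = Max (insert 0 ((\<lambda>e. cmod (x e)) ` E))"

text \<open>Planar vector of a lattice point as a complex number, and the turning angle
  in (-pi, pi] from p to q (it lies in (-pi,pi) whenever q is not a negative multiple of p).\<close>
definition cpt :: "vert \<Rightarrow> complex" where
  "cpt p = Complex (of_int (fst p)) (of_int (snd p))"

definition turn :: "vert \<Rightarrow> vert \<Rightarrow> real" where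
  "turn p q = Arg (cpt q / cpt p)"

definition vdiff :: "vert \<Rightarrow> vert \<Rightarrow> vert" where
  "vdiff v u = (fst v - fst u, snd v - snd u)"

definition Lam :: "int \<Rightarrow> int \<Rightarrow> int \<Rightarrow> int \<Rightarrow> (vert set \<Rightarrow> complex)
    \<Rightarrow> vert \<times> vert \<Rightarrow> vert \<times> vert \<Rightarrow> complex" where
  "Lam a b c d x e f =
     (if e \<in> rectD a b c d \<and> f \<in> rectD a b c d \<and> snd e = fst f \<and> snd f \<noteq> fst e
      then x {fst e, snd e} *
           exp (\<i> * of_real (turn (vdiff (snd e) (fst e)) (vdiff (snd f) (fst f)) / 2))
      else 0)"

definition opnorm :: "('i \<Rightarrow> 'i \<Rightarrow> complex) \<Rightarrow> 'i set \<Rightarrow> real" where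
  "opnorm M D = Sup {L2_set (\<lambda>e. cmod (\<Sum>f\<in>D. M e f * v f)) D | v.
                      L2_set (\<lambda>e. cmod (v e)) D \<le> 1}"

definition closed_path :: "int \<Rightarrow> int \<Rightarrow> int \<Rightarrow> int \<Rightarrow> vert list \<Rightarrow> bool" where
  "closed_path a b c d vs \<longleftrightarrow> vs \<noteq> [] \<and>
     (\<forall>i < length vs. radj a b c d (vs ! i) (vs ! ((i + 1) mod length vs)) \<and>
                      vs ! ((i + 2) mod length vs) \<noteq> vs ! i)"

definition vless :: "vert rel" where
  "vless = {(p, q). fst p < fst q \<or> (fst p = fst q \<and> snd p < snd q)}"

definition is_loop :: "int \<Rightarrow> int \<Rightarrow> int \<Rightarrow> int \<Rightarrow> vert list \<Rightarrow> bool" where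
  "is_loop a b c d vs \<longleftrightarrow> closed_path a b c d vs \<and>
     (\<forall>k < length vs. \<forall>ws \<in> {rotate k vs, rotate k (rev vs)}.
        vs = ws \<or> (vs, ws) \<in> lexord vless)"

definition loops :: "int \<Rightarrow> int \<Rightarrow> int \<Rightarrow> int \<Rightarrow> nat \<Rightarrow> vert list set" where
  "loops a b c d r = {vs. is_loop a b c d vs \<and> length vs = r}"

definition mult :: "vert list \<Rightarrow> nat" where
  "mult vs = length vs div (LEAST p. 0 < p \<and> rotate p vs = vs)"

definition winding :: "vert list \<Rightarrow> real" where
  "winding vs = (let n = length vs in
     \<Sum>i<n. turn (vdiff (vs ! ((i + 1) mod n)) (vs ! i))
                (vdiff (vs ! ((i + 2) mod n)) (vs ! ((i + 1) mod n))))"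

definition lsgn :: "vert list \<Rightarrow> complex" where
  "lsgn vs = - exp (\<i> * of_real (winding vs / 2))"

definition lweight :: "vert list \<Rightarrow> (vert set \<Rightarrow> complex) \<Rightarrow> complex" where
  "lweight vs x = lsgn vs / of_nat (mult vs) *
     (\<Prod>i<length vs. x {vs ! i, vs ! ((i + 1) mod length vs)})"

definition f_r :: "int \<Rightarrow> int \<Rightarrow> int \<Rightarrow> int \<Rightarrow> nat \<Rightarrow> (vert set \<Rightarrow> complex) \<Rightarrow> complex" where
  "f_r a b c d r x = (\<Sum>vs\<in>loops a b c d r. lweight vs x)"

end

theory Submission
  imports Defs
begin

(* Every directed edge of the rectangle points in one of the four lattice
   directions, and the entry of Lambda(x) from an edge e into an edge f leaving the head of e
   is x_e times a half-turn factor that only depends on the two directions.  These factors form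
   a fixed 4x4 matrix whose Euclidean norm is at most 1 + sqrt 2; grouping the coordinates of a
   vector by the tail vertex of the edge therefore gives the operator-norm bound
   ||Lambda(x)|| <= (1 + sqrt 2) ||x||_inf, the first claim.

   For the second claim we expand the trace of Lambda(x)^r as a sum over cyclic vertex sequences
   of length r: only closed non-backtracking paths survive, each contributing -sgn * prod x.
   The weight of a closed path is invariant under rotation and reversal; each dihedral orbit
   contains exactly one loop l and has 2 r / m(l) elements, so the trace equals -2 r f_r(x).
   Finally |tr Lambda(x)^r| <= |D| ||Lambda(x)||^r with |D| <= 4 |V| directed edges. *)

section \<open>Lattice directions and half-turn factors\<close>

lemma exp_i_real: "exp (\<i> * complex_of_real t) = Complex (cos t) (sin t)"
  by (metis cis.ctr cis_conv_exp)

lemma Arg_i: "Arg \<i> = pi/2"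
  by (rule Arg_unique[of 1], subst exp_i_real) (simp_all add: complex_eq_iff)

lemma Arg_minus_i: "Arg (-\<i>) = -pi/2"
proof -
  have "-(pi/2) \<le> pi" using pi_gt_zero by linarith
  then show ?thesis by (intro Arg_unique[of 1], subst exp_i_real) (simp_all add: complex_eq_iff)
qed

definition zeta8 :: complex where "zeta8 = Complex (sqrt 2 / 2) (sqrt 2 / 2)"

lemma exp_i_pi4: "exp (\<i> * of_real (pi/4)) = zeta8"
  by (subst exp_i_real) (simp add: zeta8_def cos_45 sin_45)

lemma exp_minus_i_pi4: "exp (- (\<i> * of_real (pi/4))) = cnj zeta8"
  using exp_i_real[of "-pi/4"] by (simp add: zeta8_def cos_45 sin_45 complex_eq_iff)

lemma zeta8_facts: "zeta8 * cnj zeta8 = 1" "zeta8 * zeta8 = \<i>" "cnj zeta8 * cnj zeta8 = - \<i>"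
  by (simp_all add: zeta8_def complex_eq_iff power_divide)

text \<open>The four unit steps of Z^2, numbered counterclockwise (index 3 also covers all k >= 3).\<close>
definition udir :: "nat \<Rightarrow> vert" where
  "udir k = (if k = 0 then (1,0) else if k = 1 then (0,1) else if k = 2 then (-1,0) else (0,-1))"

text \<open>The half-turn factor exp(i angle/2) for a step in direction d followed by one in
  direction d': 1 straight ahead, zeta8 for a left turn, its conjugate for a right turn, and 0
  for the forbidden U-turn.\<close>
definition hturn :: "nat \<Rightarrow> nat \<Rightarrow> complex" where
  "hturn d d' = (if d' = d then 1 else if d' = (d+1) mod 4 then zeta8
                 else if d' = (d+3) mod 4 then cnj zeta8 else 0)"

lemma less_4_cases: "(k::nat) < 4 \<Longrightarrow> k = 0 \<or> k = 1 \<or> k = 2 \<or> k = 3"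
  by auto

lemma cpt_udir: "cpt (udir 0) = 1" "cpt (udir 1) = \<i>" "cpt (udir (Suc 0)) = \<i>"
  "cpt (udir 2) = -1" "cpt (udir 3) = -\<i>"
  by (simp_all add: cpt_def udir_def complex_eq_iff)

lemma cpt_udir_nonzero: "k < 4 \<Longrightarrow> cpt (udir k) \<noteq> 0"
  by (drule less_4_cases) (elim disjE; simp add: cpt_udir)

lemma turn_udir:
  assumes "d < 4" "d' < 4" "d' \<noteq> (d+2) mod 4"
  shows "turn (udir d) (udir d') = (if d' = d then 0 else if d' = (d+1) mod 4 then pi/2 else -pi/2)"
proof -
  have "d \<in> {0,1,2,3}" "d' \<in> {0,1,2,3}" using assms by auto
  then show ?thesis using assms
    by (elim insertE emptyE; simp add: turn_def cpt_udir Arg_i Arg_minus_i divide_complex_def)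
qed

lemma exp_half_turn:
  assumes "d < 4" "d' < 4" "d' \<noteq> (d+2) mod 4"
  shows "exp (\<i> * of_real (turn (udir d) (udir d') / 2)) = hturn d d'"
proof -
  have "d \<in> {0,1,2,3}" "d' \<in> {0,1,2,3}" using assms by auto
  moreover have "pi/2/2 = pi/4" "-pi/2/2 = -pi/4" by simp_all
  ultimately show ?thesis using assms
    by (elim insertE emptyE; simp add: turn_udir hturn_def exp_i_pi4 exp_minus_i_pi4 del: of_real_divide)
qed

lemma hturn_uturn: "j < 4 \<Longrightarrow> hturn j ((j+2) mod 4) = 0"
  by (drule less_4_cases) (auto simp: hturn_def)

lemma hturn_reverse:
  "j < 4 \<Longrightarrow> k < 4 \<Longrightarrow> hturn ((k + 2) mod 4) ((j + 2) mod 4) = cnj (hturn j k)"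
  by (drule less_4_cases, drule less_4_cases) (elim disjE; simp add: hturn_def)

lemma hturn_square:
  "j < 4 \<Longrightarrow> k < 4 \<Longrightarrow> k \<noteq> (j + 2) mod 4 \<Longrightarrow> (hturn j k)\<^sup>2 = cpt (udir k) / cpt (udir j)"
  by (drule less_4_cases, drule less_4_cases)
    (elim disjE; simp add: hturn_def cpt_udir power2_eq_square zeta8_facts)

section \<open>The norm of the 4x4 half-turn matrix\<close>

lemma sum_lessThan_4: "(\<Sum>d<4. f d) = f 0 + f 1 + f 2 + (f (3::nat) :: 'a::comm_monoid_add)"
  by (simp add: eval_nat_numeral add.assoc)

text \<open>Writing H for the half-turn matrix, H + H^* - H^* H = I; this is the algebraic identity
  behind the bound ||H|| <= 1 + sqrt 2, in the form ||Hy||^2 = ||y||^2 + 2 Re <y, Hy>.\<close>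
lemma hturn_energy_identity:
  fixes y :: "nat \<Rightarrow> complex"
  defines "z \<equiv> \<lambda>d. (\<Sum>k<4. hturn d k * y k)"
  shows "(\<Sum>d<4. z d * cnj (z d)) =
         (\<Sum>d<4. y d * cnj (y d)) + (\<Sum>d<4. cnj (y d) * z d + y d * cnj (z d))"
proof -
  have "zeta8 * cnj zeta8 = 1" "zeta8 * zeta8 = \<i>" "cnj zeta8 * cnj zeta8 = - \<i>"
    by (rule zeta8_facts)+
  then show ?thesis
    unfolding z_def sum_lessThan_4 by (simp add: hturn_def, algebra)
qed

lemma sqrt_quad_bound:
  fixes t n :: real
  assumes "0 \<le> n" "t\<^sup>2 \<le> n\<^sup>2 + 2 * n * t"
  shows "t \<le> (1 + sqrt 2) * n"
proof -
  have "(t - n)\<^sup>2 \<le> (sqrt 2 * n)\<^sup>2"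
    using assms(2) by (simp add: power_mult_distrib power2_diff algebra_simps)
  then have "t - n \<le> sqrt 2 * n"
    by (rule power2_le_imp_le) (use assms(1) in simp)
  then show ?thesis by (simp add: algebra_simps)
qed

text \<open>||H y|| <= (1 + sqrt 2) ||y||: by the energy identity and Cauchy-Schwarz,
  T = N + 2P with P <= sqrt N sqrt T, where T = ||Hy||^2 and N = ||y||^2.\<close>
lemma hturn_norm:
  fixes y :: "nat \<Rightarrow> complex"
  shows "(\<Sum>d<4. (cmod (\<Sum>k<4. hturn d k * y k))\<^sup>2) \<le> (1 + sqrt 2)\<^sup>2 * (\<Sum>k<4. (cmod (y k))\<^sup>2)"
proof -
  define z where "z = (\<lambda>d. (\<Sum>k<4. hturn d k * y k))"
  define T where "T = (\<Sum>d<4. (cmod (z d))\<^sup>2)"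
  define N where "N = (\<Sum>d<4. (cmod (y d))\<^sup>2)"
  define P where "P = (\<Sum>d<4. Re (cnj (y d) * z d))"
  have sq: "\<And>w::complex. Re (w * cnj w) = (cmod w)\<^sup>2"
    by (metis Re_complex_of_real complex_norm_square)
  have re2: "\<And>u w::complex. Re (cnj u * w) + Re (u * cnj w) = 2 * Re (cnj u * w)"
    by simp
  have id: "(\<Sum>d<4. z d * cnj (z d)) =
      (\<Sum>d<4. y d * cnj (y d)) + (\<Sum>d<4. cnj (y d) * z d + y d * cnj (z d))"
    unfolding z_def by (rule hturn_energy_identity)
  have TNP: "T = N + 2 * P"
    using arg_cong[OF id, of Re]
    by (simp only: Re_sum sq plus_complex.sel re2 T_def N_def P_def sum_distrib_left)
  have "P \<le> (\<Sum>d<4. \<bar>cmod (y d)\<bar> * \<bar>cmod (z d)\<bar>)"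
    unfolding P_def
    by (rule sum_mono) (metis abs_norm_cancel complex_Re_le_cmod complex_mod_cnj norm_mult)
  also have "\<dots> \<le> L2_set (\<lambda>d. cmod (y d)) {..<4} * L2_set (\<lambda>d. cmod (z d)) {..<4}"
    by (rule L2_set_mult_ineq)
  also have "\<dots> = sqrt N * sqrt T"
    by (simp add: L2_set_def N_def T_def)
  finally have P_le: "P \<le> sqrt N * sqrt T" .
  have T0: "0 \<le> T" "0 \<le> N" unfolding T_def N_def by (auto intro: sum_nonneg)
  have "(sqrt T)\<^sup>2 \<le> (sqrt N)\<^sup>2 + 2 * sqrt N * sqrt T"
    using TNP P_le T0 by simp
  then have "sqrt T \<le> (1 + sqrt 2) * sqrt N" by (rule sqrt_quad_bound[rotated]) (simp add: T0)
  then have "(sqrt T)\<^sup>2 \<le> ((1 + sqrt 2) * sqrt N)\<^sup>2"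
    by (rule power_mono) (simp add: T0)
  then show ?thesis using T0 unfolding T_def N_def z_def by (simp add: power_mult_distrib)
qed

definition vadd :: "vert \<Rightarrow> vert \<Rightarrow> vert" where "vadd w p = (fst w + fst p, snd w + snd p)"

text \<open>The index of a unit step (meaningful only for unit steps).\<close>
definition dir_idx :: "vert \<Rightarrow> nat" where
  "dir_idx p = (if p = (1,0) then 0 else if p = (0,1) then 1 else if p = (-1,0) then 2 else 3)"

lemma dir_idx_lt: "dir_idx p < 4"
  by (simp add: dir_idx_def)

lemma udir_dir_idx: "\<bar>fst p\<bar> + \<bar>snd p\<bar> = 1 \<Longrightarrow> udir (dir_idx p) = p"
  by (cases p) (auto simp: dir_idx_def udir_def abs_if split: if_splits)

lemma dir_idx_udir: "k < 4 \<Longrightarrow> dir_idx (udir k) = k"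
  by (drule less_4_cases) (auto simp: dir_idx_def udir_def)

lemma vdiff_vadd [simp]: "vdiff (vadd w p) w = p"
  by (simp add: vdiff_def vadd_def)

lemma vadd_vdiff [simp]: "vadd u (vdiff w u) = w"
  by (simp add: vdiff_def vadd_def)

lemma vdiff_inj: "vdiff w u1 = vdiff w u2 \<Longrightarrow> u1 = u2"
  by (cases u1, cases u2) (simp add: vdiff_def)

lemma vdiff_swap_udir: "j < 4 \<Longrightarrow> vdiff q p = udir j \<Longrightarrow> vdiff p q = udir ((j + 2) mod 4)"
  by (drule less_4_cases) (elim disjE; auto simp: vdiff_def udir_def prod_eq_iff)

lemma vadd_udir_inj: "k < 4 \<Longrightarrow> k' < 4 \<Longrightarrow> vadd w (udir k) = vadd w (udir k') \<Longrightarrow> k = k'"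
  by (metis dir_idx_udir vdiff_vadd)

lemma vadd_uturn:
  "j < 4 \<Longrightarrow> k < 4 \<Longrightarrow> vadd (vadd u (udir j)) (udir k) = u \<longleftrightarrow> k = (j+2) mod 4"
  by (drule less_4_cases, drule less_4_cases, cases u) (auto simp: vadd_def udir_def)

lemma radj_sym: "radj a b c d u w \<Longrightarrow> radj a b c d w u"
  by (auto simp: radj_def abs_minus_commute)

lemma radj_ne: "radj a b c d u w \<Longrightarrow> u \<noteq> w"
  by (auto simp: radj_def)

lemma radj_udir: "radj a b c d u w \<Longrightarrow> udir (dir_idx (vdiff w u)) = vdiff w u"
  by (rule udir_dir_idx) (simp add: radj_def vdiff_def abs_minus_commute)

lemma radj_vadd: "radj a b c d u w \<Longrightarrow> w = vadd u (udir (dir_idx (vdiff w u)))"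
  by (simp add: radj_udir)

lemma radj_pair_dirs:
  assumes "radj a b c d p q" "radj a b c d q r" "r \<noteq> p"
  obtains j k where "j < 4" "k < 4" "vdiff q p = udir j" "vdiff r q = udir k" "k \<noteq> (j + 2) mod 4"
proof -
  define j where "j = dir_idx (vdiff q p)"
  define k where "k = dir_idx (vdiff r q)"
  have j: "j < 4" "vdiff q p = udir j" using radj_udir[OF assms(1)] by (simp_all add: j_def dir_idx_lt)
  have k: "k < 4" "vdiff r q = udir k" using radj_udir[OF assms(2)] by (simp_all add: k_def dir_idx_lt)
  have "q = vadd p (udir j)" "r = vadd q (udir k)" using j k by (metis vadd_vdiff)+
  then have "k \<noteq> (j + 2) mod 4" using vadd_uturn[OF j(1) k(1), of p] assms(3) by auto
  then show ?thesis using that j k by blast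
qed

lemma finite_rectV: "finite (rectV a b c d)"
proof -
  have "rectV a b c d \<subseteq> {a..b} \<times> {c..d}" by (auto simp: rectV_def)
  then show ?thesis by (rule finite_subset) simp
qed

lemma rectD_subset: "rectD a b c d \<subseteq> rectV a b c d \<times> rectV a b c d"
  by (auto simp: rectD_def radj_def)

lemma finite_rectD: "finite (rectD a b c d)"
  using finite_subset[OF rectD_subset] finite_rectV by blast

lemma rectE_image: "rectE a b c d = (\<lambda>(u,v). {u,v}) ` rectD a b c d"
  by (auto simp: rectE_def rectD_def)

lemma finite_rectE: "finite (rectE a b c d)"
  by (simp add: rectE_image finite_rectD)

text \<open>A directed edge is determined by its tail and its direction; hence |D| <= 4|V|.\<close>
lemma card_rectD: "card (rectD a b c d) \<le> 4 * card (rectV a b c d)"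
proof -
  define g where "g = (\<lambda>(w, k). (w, vadd w (udir k)))"
  have "rectD a b c d \<subseteq> g ` (rectV a b c d \<times> {..<4})"
  proof
    fix e assume e: "e \<in> rectD a b c d"
    obtain u w where uw: "e = (u, w)" by (cases e)
    have r: "radj a b c d u w" using e uw by (simp add: rectD_def)
    have "w = vadd u (udir (dir_idx (vdiff w u)))" by (rule radj_vadd[OF r])
    moreover have "u \<in> rectV a b c d" using r by (simp add: radj_def)
    ultimately
    show "e \<in> g ` (rectV a b c d \<times> {..<4})"
      using uw dir_idx_lt[of "vdiff w u"] by (auto simp: g_def intro!: image_eqI[of _ _ "(u, dir_idx (vdiff w u))"])
  qed
  then have "card (rectD a b c d) \<le> card (g ` (rectV a b c d \<times> {..<4::nat}))"
    by (rule card_mono[rotated]) (simp add: finite_rectV)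
  also have "\<dots> \<le> card (rectV a b c d \<times> {..<4::nat})"
    by (rule card_image_le) (simp add: finite_rectV)
  also have "\<dots> = 4 * card (rectV a b c d)" by (simp add: card_cartesian_product)
  finally show ?thesis .
qed

lemma supnorm_ge: "finite E \<Longrightarrow> e \<in> E \<Longrightarrow> cmod (x e) \<le> supnorm E x"
  unfolding supnorm_def by (rule Max_ge) auto

lemma supnorm_nonneg: "finite E \<Longrightarrow> 0 \<le> supnorm E x"
  unfolding supnorm_def by (rule Max_ge) auto

lemma edge_le_supnorm: "e \<in> rectD a b c d \<Longrightarrow> cmod (x {fst e, snd e}) \<le> supnorm (rectE a b c d) x"
  by (rule supnorm_ge[OF finite_rectE]) (force simp: rectE_image)

definition mat_apply :: "('i \<Rightarrow> 'i \<Rightarrow> complex) \<Rightarrow> 'i set \<Rightarrow> ('i \<Rightarrow> complex) \<Rightarrow> 'i \<Rightarrow> complex" where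
  "mat_apply M D v = (\<lambda>e. \<Sum>f\<in>D. M e f * v f)"

definition unit_vec :: "'i \<Rightarrow> 'i \<Rightarrow> complex" where
  "unit_vec e0 = (\<lambda>f. if f = e0 then 1 else 0)"

lemma opnorm_le:
  assumes K: "0 \<le> K"
    and bound: "\<And>v. L2_set (\<lambda>e. cmod (mat_apply M D v e)) D \<le> K * L2_set (\<lambda>e. cmod (v e)) D"
  shows "opnorm M D \<le> K"
proof -
  define S where "S = {L2_set (\<lambda>e. cmod (\<Sum>f\<in>D. M e f * v f)) D | v. L2_set (\<lambda>e. cmod (v e)) D \<le> 1}"
  have "L2_set (\<lambda>e. cmod (\<Sum>f\<in>D. M e f * (\<lambda>_. 0::complex) f)) D \<in> S"
    unfolding S_def by (rule CollectI, rule exI[of _ "\<lambda>_. 0"]) (simp add: L2_set_def)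
  then have nonempty: "S \<noteq> {}" by blast
  have "y \<le> K" if "y \<in> S" for y
  proof -
    obtain v where y: "y = L2_set (\<lambda>e. cmod (mat_apply M D v e)) D"
      and v: "L2_set (\<lambda>e. cmod (v e)) D \<le> 1"
      using \<open>y \<in> S\<close> unfolding S_def mat_apply_def by blast
    have "y \<le> K * L2_set (\<lambda>e. cmod (v e)) D" unfolding y by (rule bound)
    also have "\<dots> \<le> K" using mult_left_mono[OF v K] by simp
    finally show ?thesis .
  qed
  then show ?thesis unfolding opnorm_def S_def[symmetric] by (rule cSup_least[OF nonempty])
qed

lemma iterate_norm_le:
  assumes K: "0 \<le> K"
    and bound: "\<And>v. L2_set (\<lambda>e. cmod (mat_apply M D v e)) D \<le> K * L2_set (\<lambda>e. cmod (v e)) D"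
  shows "L2_set (\<lambda>e. cmod ((mat_apply M D ^^ k) v e)) D \<le> K ^ k * L2_set (\<lambda>e. cmod (v e)) D"
proof (induction k)
  case (Suc k)
  have "L2_set (\<lambda>e. cmod ((mat_apply M D ^^ Suc k) v e)) D
      \<le> K * L2_set (\<lambda>e. cmod ((mat_apply M D ^^ k) v e)) D"
    by (simp add: bound)
  also have "\<dots> \<le> K * (K ^ k * L2_set (\<lambda>e. cmod (v e)) D)"
    by (rule mult_left_mono[OF Suc K])
  finally show ?case by (simp add: mult_ac)
qed simp

lemma iterate_diag_le:
  assumes "finite D" "e0 \<in> D" "0 \<le> K"
    and bound: "\<And>v. L2_set (\<lambda>e. cmod (mat_apply M D v e)) D \<le> K * L2_set (\<lambda>e. cmod (v e)) D"
  shows "cmod ((mat_apply M D ^^ k) (unit_vec e0) e0) \<le> K ^ k"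
proof -
  have unit: "L2_set (\<lambda>e. cmod (unit_vec e0 e)) D = 1"
  proof -
    have "(\<Sum>e\<in>D. (cmod (unit_vec e0 e))\<^sup>2) = (\<Sum>e\<in>D. if e = e0 then 1 else 0)"
      by (rule sum.cong) (auto simp: unit_vec_def)
    also have "\<dots> = 1" using assms(1,2) by simp
    finally show ?thesis by (simp add: L2_set_def)
  qed
  have "cmod ((mat_apply M D ^^ k) (unit_vec e0) e0)
      \<le> L2_set (\<lambda>e. cmod ((mat_apply M D ^^ k) (unit_vec e0) e)) D"
    by (rule member_le_L2_set[OF assms(1,2)])
  also have "\<dots> \<le> K ^ k"
    using iterate_norm_le[OF assms(3) bound, of k "unit_vec e0"] unit by simp
  finally show ?thesis .
qed

section \<open>Traces of edge-supported matrices as sums over cyclic words\<close>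

definition edge_supported :: "('v \<times> 'v) set \<Rightarrow> ('v \<times> 'v \<Rightarrow> 'v \<times> 'v \<Rightarrow> complex) \<Rightarrow> bool" where
  "edge_supported D M \<longleftrightarrow> (\<forall>e f. M e f \<noteq> 0 \<longrightarrow> e \<in> D \<and> f \<in> D \<and> fst f = snd e)"

definition words :: "'v set \<Rightarrow> nat \<Rightarrow> 'v list set" where
  "words V k = {ws. set ws \<subseteq> V \<and> length ws = k}"

lemma finite_words: "finite V \<Longrightarrow> finite (words V k)"
  unfolding words_def by (rule finite_lists_length_eq)

lemma sum_words_Suc:
  assumes "finite V"
  shows "(\<Sum>ws\<in>words V (Suc k). h ws) = (\<Sum>z\<in>V. \<Sum>ws\<in>words V k. h (z # ws))"
proof -
  have img: "words V (Suc k) = (\<lambda>(z, ws). z # ws) ` (V \<times> words V k)"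
    by (auto simp: words_def length_Suc_conv)
  have inj: "inj_on (\<lambda>(z, ws). z # ws) (V \<times> words V k)" by (auto simp: inj_on_def)
  show ?thesis
    unfolding img by (subst sum.reindex[OF inj]) (simp add: sum.cartesian_product case_prod_unfold)
qed

lemma mat_apply_by_successor:
  assumes M: "edge_supported D M" and DV: "D \<subseteq> V \<times> V" and V: "finite V"
  shows "mat_apply M D v e = (\<Sum>z\<in>V. M e (snd e, z) * v (snd e, z))"
proof -
  have supp: "f \<in> D \<and> fst f = snd e" if "M e f \<noteq> 0" for f
    using M that unfolding edge_supported_def by blast
  have "(\<Sum>f\<in>D. M e f * v f) = (\<Sum>f\<in>Pair (snd e) ` V. M e f * v f)"
  proof (rule sum.mono_neutral_cong)
    show "finite D" using finite_subset[OF DV] V by blast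
    show "M e f * v f = 0" if "f \<in> Pair (snd e) ` V - D" for f
      using that supp by (metis DiffD2 mult_eq_0_iff)
    show "M e f * v f = 0" if f: "f \<in> D - Pair (snd e) ` V" for f
    proof -
      have "snd f \<in> V" using f DV by auto
      then have "fst f \<noteq> snd e" using f by (metis DiffD2 image_eqI prod.collapse)
      then show ?thesis using supp[of f] by auto
    qed
  qed (use V in auto)
  also have "\<dots> = (\<Sum>z\<in>V. M e (snd e, z) * v (snd e, z))"
    by (subst sum.reindex) (auto simp: inj_on_def)
  finally show ?thesis by (simp add: mat_apply_def)
qed

text \<open>The product of matrix entries along the walk that starts with edge e and then visits the
  vertices of ws, times the indicator that the walk ends with edge e0.\<close>
fun walk_prod :: "('v \<times> 'v \<Rightarrow> 'v \<times> 'v \<Rightarrow> complex) \<Rightarrow> 'v \<times> 'v \<Rightarrow> 'v \<times> 'v \<Rightarrow> 'v list \<Rightarrow> complex" where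
  "walk_prod M e0 e [] = (if e = e0 then 1 else 0)"
| "walk_prod M e0 e (z # ws) = M e (snd e, z) * walk_prod M e0 (snd e, z) ws"

lemma iterate_walk_prod:
  assumes "edge_supported D M" "D \<subseteq> V \<times> V" "finite V"
  shows "(mat_apply M D ^^ k) (unit_vec e0) e = (\<Sum>ws\<in>words V k. walk_prod M e0 e ws)"
proof (induction k arbitrary: e)
  case 0
  have "words V 0 = {[]}" by (auto simp: words_def)
  then show ?case by (simp add: unit_vec_def)
next
  case (Suc k)
  have "(mat_apply M D ^^ Suc k) (unit_vec e0) e
      = (\<Sum>z\<in>V. M e (snd e, z) * (mat_apply M D ^^ k) (unit_vec e0) (snd e, z))"
    by (simp add: mat_apply_by_successor[OF assms])
  also have "\<dots> = (\<Sum>z\<in>V. \<Sum>ws\<in>words V k. walk_prod M e0 e (z # ws))"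
    by (simp add: Suc sum_distrib_left)
  also have "\<dots> = (\<Sum>ws\<in>words V (Suc k). walk_prod M e0 e ws)"
    by (rule sum_words_Suc[OF assms(3), symmetric])
  finally show ?case .
qed

definition walk_edge :: "'v list \<Rightarrow> nat \<Rightarrow> 'v \<times> 'v" where
  "walk_edge p i = (p ! i, p ! (i + 1))"

lemma walk_prod_formula:
  "walk_prod M e0 e ws =
     (\<Prod>i<length ws. M (walk_edge (fst e # snd e # ws) i) (walk_edge (fst e # snd e # ws) (Suc i)))
     * (if walk_edge (fst e # snd e # ws) (length ws) = e0 then 1 else 0)"
proof (induction ws arbitrary: e)
  case Nil then show ?case by (simp add: walk_edge_def)
next
  case (Cons z ws)
  show ?case
    by (simp add: Cons prod.lessThan_Suc_shift walk_edge_def mult.assoc del: prod.lessThan_Suc)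
qed

definition cyc_edge :: "'v list \<Rightarrow> nat \<Rightarrow> 'v \<times> 'v" where
  "cyc_edge vs i = (vs ! (i mod length vs), vs ! ((i + 1) mod length vs))"

definition cyc_prod :: "('v \<times> 'v \<Rightarrow> 'v \<times> 'v \<Rightarrow> complex) \<Rightarrow> 'v list \<Rightarrow> complex" where
  "cyc_prod M vs = (\<Prod>i<length vs. M (cyc_edge vs i) (cyc_edge vs (Suc i)))"

lemma walk_prod_cyc_prod:
  assumes "2 \<le> length vs"
  shows "walk_prod M (vs!0, vs!1) (vs!0, vs!1) (rotate 2 vs) = cyc_prod M vs"
proof -
  define r where "r = length vs"
  define p where "p = vs!0 # vs!1 # rotate 2 vs"
  have r2: "2 \<le> r" using assms by (simp add: r_def)
  have p_nth: "p ! i = vs ! (i mod r)" if "i < r + 2" for i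
  proof (cases i)
    case (Suc j)
    then show ?thesis
      using that r2 by (cases j) (simp_all add: p_def nth_rotate r_def)
  qed (use r2 in \<open>simp add: p_def\<close>)
  have edge: "walk_edge p i = cyc_edge vs i" if "i \<le> r" for i
    using that p_nth[of i] p_nth[of "i+1"] by (simp add: walk_edge_def cyc_edge_def r_def)
  have "Suc r mod r = (r + 1) mod r" by simp
  also have "\<dots> = 1" using r2 by (simp only: mod_add_self1) simp
  finally have "Suc r mod r = 1" .
  then have last: "walk_edge p r = (vs!0, vs!1)"
    using p_nth[of r] p_nth[of "r+1"] r2 by (simp add: walk_edge_def)
  have p: "fst (vs!0, vs!1) # snd (vs!0, vs!1) # rotate 2 vs = p" by (simp add: p_def)
  have "walk_prod M (vs!0, vs!1) (vs!0, vs!1) (rotate 2 vs) = (\<Prod>i<r. M (walk_edge p i) (walk_edge p (Suc i)))"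
    using walk_prod_formula[of M "(vs!0, vs!1)" "(vs!0, vs!1)" "rotate 2 vs", unfolded p]
    by (simp add: r_def[symmetric] last)
  also have "\<dots> = cyc_prod M vs"
    unfolding cyc_prod_def r_def[symmetric] by (rule prod.cong) (simp_all add: edge)
  finally show ?thesis .
qed

lemma cyc_prod_first_edge_zero:
  assumes "edge_supported D M" "2 \<le> length vs" "(vs!0, vs!1) \<notin> D"
  shows "cyc_prod M vs = 0"
proof -
  have "cyc_edge vs 0 = (vs!0, vs!1)" using assms(2) by (simp add: cyc_edge_def)
  then have "M (cyc_edge vs 0) (cyc_edge vs (Suc 0)) = 0"
    using assms(1,3) unfolding edge_supported_def by metis
  then show ?thesis unfolding cyc_prod_def using assms(2) by (subst prod_zero_iff) auto
qed

text \<open>Cutting a cyclic word at its first edge identifies the sum of cyclic products with the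
  sum of closed-walk products over pairs (starting edge, word).\<close>
lemma sum_cyc_prod_walks:
  fixes M :: "'v \<times> 'v \<Rightarrow> 'v \<times> 'v \<Rightarrow> complex"
  assumes M: "edge_supported D M" and DV: "D \<subseteq> V \<times> V" and V: "finite V" and r2: "2 \<le> r"
  shows "(\<Sum>vs\<in>words V r. cyc_prod M vs) = (\<Sum>q\<in>D \<times> words V r. walk_prod M (fst q) (fst q) (snd q))"
proof -
  define A where "A = {vs\<in>words V r. (vs!0, vs!1) \<in> D}"
  define cut where "cut = (\<lambda>vs::'v list. ((vs!0, vs!1), rotate 2 vs))"
  define g where "g = (\<lambda>q::('v \<times> 'v) \<times> 'v list. walk_prod M (fst q) (fst q) (snd q))"
  have finD: "finite D" using finite_subset[OF DV] V by blast
  have "(\<Sum>vs\<in>words V r. cyc_prod M vs) = (\<Sum>vs\<in>A. cyc_prod M vs)"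
  proof (rule sum.mono_neutral_right)
    show "finite (words V r)" by (rule finite_words[OF V])
    show "\<forall>vs\<in>words V r - A. cyc_prod M vs = 0"
      using r2 cyc_prod_first_edge_zero[OF M] by (simp add: A_def words_def)
  qed (simp add: A_def)
  also have "\<dots> = (\<Sum>vs\<in>A. g (cut vs))"
  proof (rule sum.cong)
    fix vs assume "vs \<in> A"
    then have "2 \<le> length vs" using r2 by (simp add: A_def words_def)
    then show "cyc_prod M vs = g (cut vs)" using walk_prod_cyc_prod[of vs M] by (simp add: g_def cut_def)
  qed simp
  also have "\<dots> = (\<Sum>q\<in>cut ` A. g q)"
  proof (rule sum.reindex[symmetric, unfolded comp_def], rule inj_onI)
    fix v1 v2 assume v: "v1 \<in> A" "v2 \<in> A" "cut v1 = cut v2"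
    then have "rotate 2 v1 = rotate 2 v2" "length v1 = r" "length v2 = r"
      by (auto simp: cut_def A_def words_def)
    then have "rotate (r - 2) (rotate 2 v1) = rotate (r - 2) (rotate 2 v2)" by simp
    moreover have rr: "r - 2 + 2 = r" using r2 by simp
    ultimately have "rotate r v1 = rotate r v2" by (simp only: rotate_rotate rr)
    then show "v1 = v2" using \<open>length v1 = r\<close> \<open>length v2 = r\<close> by simp
  qed
  also have "\<dots> = (\<Sum>q\<in>D \<times> words V r. g q)"
  proof (rule sum.mono_neutral_left)
    show "finite (D \<times> words V r)" using finD finite_words[OF V] by simp
    show "cut ` A \<subseteq> D \<times> words V r" by (auto simp: cut_def A_def words_def)
    show "\<forall>q\<in>D \<times> words V r - cut ` A. g q = 0"
    proof (rule ballI, rule ccontr)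
      fix q assume q: "q \<in> D \<times> words V r - cut ` A" and nz: "g q \<noteq> 0"
      obtain e0 ws where qe: "q = (e0, ws)" by (cases q)
      have ws: "set ws \<subseteq> V" "length ws = r" and e0: "e0 \<in> D" using q qe by (auto simp: words_def)
      obtain m where rm: "r = Suc (Suc m)" using r2 by (metis add_2_eq_Suc le_Suc_ex)
      have "walk_edge (fst e0 # snd e0 # ws) r = e0"
        using nz ws walk_prod_formula[of M e0 e0 ws] by (simp add: g_def qe split: if_splits)
      then have e0w: "e0 = (ws ! m, ws ! Suc m)" by (simp add: walk_edge_def rm)
      define vs where "vs = rotate m ws"
      have "rotate 2 vs = rotate (m + 2) ws" unfolding vs_def by (simp only: rotate_rotate add.commute)
      also have "\<dots> = ws" by (rule rotate_id) (use ws rm in simp)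
      finally have "cut vs = q" using ws rm e0w by (simp add: cut_def qe vs_def nth_rotate)
      moreover have "vs \<in> A" using ws rm e0 e0w by (simp add: A_def words_def vs_def nth_rotate)
      ultimately show False using q by blast
    qed
  qed
  finally show ?thesis by (simp add: g_def)
qed

lemma trace_as_cyc_prods:
  assumes "edge_supported D M" "D \<subseteq> V \<times> V" "finite V" "2 \<le> r"
  shows "(\<Sum>vs\<in>words V r. cyc_prod M vs) = (\<Sum>e0\<in>D. (mat_apply M D ^^ r) (unit_vec e0) e0)"
  by (simp add: sum_cyc_prod_walks[OF assms] sum.cartesian_product case_prod_unfold iterate_walk_prod[OF assms(1-3)])

lemma Lam_edge_supported: "edge_supported (rectD a b c d) (Lam a b c d x)"
  by (auto simp: edge_supported_def Lam_def split: if_splits)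

definition edge_dir :: "vert \<times> vert \<Rightarrow> nat" where
  "edge_dir e = dir_idx (vdiff (snd e) (fst e))"

lemma edge_dir_lt: "edge_dir e < 4"
  by (simp add: edge_dir_def dir_idx_lt)

lemma edge_dir_udir: "e \<in> rectD a b c d \<Longrightarrow> udir (edge_dir e) = vdiff (snd e) (fst e)"
  unfolding edge_dir_def by (rule radj_udir) (simp add: rectD_def case_prod_unfold)

text \<open>The components of v on the edges leaving w, indexed by direction (0 where no edge).\<close>
definition out_vec :: "int \<Rightarrow> int \<Rightarrow> int \<Rightarrow> int \<Rightarrow> (vert \<times> vert \<Rightarrow> complex) \<Rightarrow> vert \<Rightarrow> nat \<Rightarrow> complex" where
  "out_vec a b c d v w k =
     (if (w, vadd w (udir k)) \<in> rectD a b c d then v (w, vadd w (udir k)) else 0)"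

lemma Lam_step:
  assumes e: "e \<in> rectD a b c d" and k: "k < 4"
    and f: "(snd e, vadd (snd e) (udir k)) \<in> rectD a b c d"
  shows "Lam a b c d x e (snd e, vadd (snd e) (udir k)) = x {fst e, snd e} * hturn (edge_dir e) k"
proof -
  define j where "j = edge_dir e"
  have j: "j < 4" by (simp add: j_def edge_dir_def dir_idx_lt)
  have head: "snd e = vadd (fst e) (udir j)" using edge_dir_udir[OF e] by (simp add: j_def)
  show ?thesis
  proof (cases "k = (j+2) mod 4")
    case True
    then have "vadd (snd e) (udir k) = fst e" using vadd_uturn[OF j k] head by simp
    then show ?thesis using True hturn_uturn[OF j] by (simp add: Lam_def j_def)
  next
    case False
    then have "vadd (snd e) (udir k) \<noteq> fst e" using vadd_uturn[OF j k] head by simp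
    moreover have "vdiff (snd e) (fst e) = udir j" using head by simp
    ultimately show ?thesis
      using e f exp_half_turn[OF j k False] by (simp add: Lam_def j_def)
  qed
qed

lemma out_edges_image:
  "{f\<in>rectD a b c d. fst f = w} =
     (\<lambda>k. (w, vadd w (udir k))) ` {k. k < 4 \<and> (w, vadd w (udir k)) \<in> rectD a b c d}"
proof (intro equalityI subsetI)
  fix f assume "f \<in> {f\<in>rectD a b c d. fst f = w}"
  then have f: "f \<in> rectD a b c d" "fst f = w" by auto
  then have "vadd w (udir (edge_dir f)) = snd f"
    using edge_dir_udir[OF f(1)] by simp
  then have "f = (w, vadd w (udir (edge_dir f)))"
    using f(2) by (metis prod.collapse)
  then show "f \<in> (\<lambda>k. (w, vadd w (udir k))) ` {k. k < 4 \<and> (w, vadd w (udir k)) \<in> rectD a b c d}"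
    using f(1) edge_dir_lt by (intro image_eqI[of _ _ "edge_dir f"]) auto
qed auto

lemma Lam_apply_form:
  assumes e: "e \<in> rectD a b c d"
  shows "mat_apply (Lam a b c d x) (rectD a b c d) v e =
     x {fst e, snd e} * (\<Sum>k<4. hturn (edge_dir e) k * out_vec a b c d v (snd e) k)"
proof -
  define w where "w = snd e"
  define S where "S = {k. k < 4 \<and> (w, vadd w (udir k)) \<in> rectD a b c d}"
  have inj: "inj_on (\<lambda>k. (w, vadd w (udir k))) S"
    by (rule inj_onI) (auto simp: S_def dest: vadd_udir_inj)
  have "mat_apply (Lam a b c d x) (rectD a b c d) v e
      = (\<Sum>f\<in>{f\<in>rectD a b c d. fst f = w}. Lam a b c d x e f * v f)"
    unfolding mat_apply_def
    by (rule sum.mono_neutral_right) (auto simp: finite_rectD Lam_def w_def)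
  also have "\<dots> = (\<Sum>k\<in>S. Lam a b c d x e (w, vadd w (udir k)) * v (w, vadd w (udir k)))"
    unfolding out_edges_image S_def[symmetric] by (rule sum.reindex[OF inj, unfolded comp_def])
  also have "\<dots> = (\<Sum>k<4. x {fst e, w} * (hturn (edge_dir e) k * out_vec a b c d v w k))"
    by (rule sum.mono_neutral_cong_left)
      (auto simp: S_def out_vec_def w_def Lam_step[OF e])
  finally show ?thesis by (simp add: w_def sum_distrib_left)
qed

text \<open>Grouping directed edges by (head, direction) is injective.\<close>
lemma sum_edges_by_head_le:
  fixes F :: "vert \<times> nat \<Rightarrow> real"
  assumes F: "\<And>p. 0 \<le> F p"
  shows "(\<Sum>e\<in>rectD a b c d. F (snd e, edge_dir e)) \<le> (\<Sum>p\<in>rectV a b c d \<times> {..<4}. F p)"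
proof -
  define head where "head = (\<lambda>e::vert\<times>vert. (snd e, edge_dir e))"
  have inj: "inj_on head (rectD a b c d)"
  proof (rule inj_onI)
    fix e1 e2 assume e: "e1 \<in> rectD a b c d" "e2 \<in> rectD a b c d" "head e1 = head e2"
    then have "snd e1 = snd e2" "vdiff (snd e1) (fst e1) = vdiff (snd e2) (fst e2)"
      using edge_dir_udir[OF e(1)] edge_dir_udir[OF e(2)] by (auto simp: head_def)
    then show "e1 = e2" using vdiff_inj by (metis prod.collapse)
  qed
  have "(\<Sum>e\<in>rectD a b c d. F (head e)) = (\<Sum>p\<in>head ` rectD a b c d. F p)"
    by (simp add: sum.reindex[OF inj])
  also have "\<dots> \<le> (\<Sum>p\<in>rectV a b c d \<times> {..<4}. F p)"
  proof (rule sum_mono2)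
    show "head ` rectD a b c d \<subseteq> rectV a b c d \<times> {..<4}"
      using rectD_subset[of a b c d] edge_dir_lt by (force simp: head_def)
  qed (simp_all add: finite_rectV F)
  finally show ?thesis by (simp add: head_def)
qed

text \<open>Grouping directed edges by (tail, direction) is bijective onto the support of out_vec.\<close>
lemma sum_out_vec:
  "(\<Sum>p\<in>rectV a b c d \<times> {..<4}. (cmod (out_vec a b c d v (fst p) (snd p)))\<^sup>2) =
   (\<Sum>f\<in>rectD a b c d. (cmod (v f))\<^sup>2)"
proof -
  define by_tail where "by_tail = (\<lambda>e::vert\<times>vert. (fst e, edge_dir e))"
  have edge_back: "(fst f, vadd (fst f) (udir (edge_dir f))) = f" if "f \<in> rectD a b c d" for f
    using edge_dir_udir[OF that] by simp
  have inj: "inj_on by_tail (rectD a b c d)"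
    by (rule inj_onI) (metis edge_back by_tail_def prod.inject)
  have "(\<Sum>p\<in>rectV a b c d \<times> {..<4}. (cmod (out_vec a b c d v (fst p) (snd p)))\<^sup>2)
      = (\<Sum>p\<in>by_tail ` rectD a b c d. (cmod (out_vec a b c d v (fst p) (snd p)))\<^sup>2)"
  proof (rule sum.mono_neutral_right)
    show "by_tail ` rectD a b c d \<subseteq> rectV a b c d \<times> {..<4}"
      using rectD_subset[of a b c d] edge_dir_lt by (force simp: by_tail_def)
    show "\<forall>p\<in>rectV a b c d \<times> {..<4} - by_tail ` rectD a b c d. (cmod (out_vec a b c d v (fst p) (snd p)))\<^sup>2 = 0"
    proof (clarsimp simp: out_vec_def)
      fix w k assume "k < 4" "(w, vadd w (udir k)) \<in> rectD a b c d"
      then have "(w, k) \<in> by_tail ` rectD a b c d"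
        by (intro image_eqI[of _ _ "(w, vadd w (udir k))"]) (simp_all add: by_tail_def edge_dir_def dir_idx_udir)
      moreover assume "(w, k) \<notin> by_tail ` rectD a b c d"
      ultimately show "v (w, vadd w (udir k)) = 0" by blast
    qed
  qed (simp add: finite_rectV)
  also have "\<dots> = (\<Sum>f\<in>rectD a b c d. (cmod (v f))\<^sup>2)"
    by (subst sum.reindex[OF inj]) (rule sum.cong, simp_all add: by_tail_def out_vec_def edge_back)
  finally show ?thesis .
qed

lemma Lam_apply_norm_sq:
  fixes a b c d :: int and x :: "vert set \<Rightarrow> complex" and v :: "vert \<times> vert \<Rightarrow> complex"
  defines "D \<equiv> rectD a b c d" and "s \<equiv> supnorm (rectE a b c d) x"
  shows "(\<Sum>e\<in>D. (cmod (mat_apply (Lam a b c d x) D v e))\<^sup>2) \<le> ((1 + sqrt 2) * s)\<^sup>2 * (\<Sum>f\<in>D. (cmod (v f))\<^sup>2)"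
proof -
  define Y where "Y = (\<lambda>p. (cmod (\<Sum>k<4. hturn (snd p) k * out_vec a b c d v (fst p) k))\<^sup>2)"
  have "(\<Sum>e\<in>D. (cmod (mat_apply (Lam a b c d x) D v e))\<^sup>2)
      = (\<Sum>e\<in>D. (cmod (x {fst e, snd e}))\<^sup>2 * Y (snd e, edge_dir e))"
    by (rule sum.cong) (simp_all add: Lam_apply_form D_def Y_def norm_mult power_mult_distrib)
  also have "\<dots> \<le> (\<Sum>e\<in>D. s\<^sup>2 * Y (snd e, edge_dir e))"
    by (intro sum_mono mult_right_mono power_mono)
      (simp_all add: s_def D_def edge_le_supnorm Y_def)
  also have "\<dots> \<le> s\<^sup>2 * (\<Sum>p\<in>rectV a b c d \<times> {..<4}. Y p)"
    unfolding sum_distrib_left[symmetric] D_def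
    by (intro mult_left_mono sum_edges_by_head_le) (simp_all add: Y_def)
  also have "\<dots> \<le> s\<^sup>2 * ((1 + sqrt 2)\<^sup>2 * (\<Sum>f\<in>D. (cmod (v f))\<^sup>2))"
  proof (rule mult_left_mono)
    have "(\<Sum>p\<in>rectV a b c d \<times> {..<4}. Y p) = (\<Sum>w\<in>rectV a b c d. \<Sum>k<4. Y (w, k))"
      by (simp add: sum.cartesian_product)
    also have "\<dots> \<le> (\<Sum>w\<in>rectV a b c d. (1 + sqrt 2)\<^sup>2 * (\<Sum>k<4. (cmod (out_vec a b c d v w k))\<^sup>2))"
      by (rule sum_mono) (simp add: Y_def hturn_norm)
    also have "\<dots> = (1 + sqrt 2)\<^sup>2 * (\<Sum>f\<in>D. (cmod (v f))\<^sup>2)"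
      using sum_out_vec[of a b c d v]
      by (simp add: sum_distrib_left[symmetric] sum.cartesian_product case_prod_unfold D_def)
    finally show "(\<Sum>p\<in>rectV a b c d \<times> {..<4}. Y p) \<le> (1 + sqrt 2)\<^sup>2 * (\<Sum>f\<in>D. (cmod (v f))\<^sup>2)" .
  qed simp
  finally show ?thesis by (simp add: power_mult_distrib mult_ac)
qed

lemma Lam_apply_norm:
  "L2_set (\<lambda>e. cmod (mat_apply (Lam a b c d x) (rectD a b c d) v e)) (rectD a b c d)
     \<le> (sqrt 2 + 1) * supnorm (rectE a b c d) x * L2_set (\<lambda>e. cmod (v e)) (rectD a b c d)"
proof -
  have s0: "0 \<le> supnorm (rectE a b c d) x" by (simp add: supnorm_nonneg finite_rectE)
  have "L2_set (\<lambda>e. cmod (mat_apply (Lam a b c d x) (rectD a b c d) v e)) (rectD a b c d)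
      \<le> sqrt (((1 + sqrt 2) * supnorm (rectE a b c d) x)\<^sup>2 * (\<Sum>f\<in>rectD a b c d. (cmod (v f))\<^sup>2))"
    unfolding L2_set_def by (rule real_sqrt_le_mono, rule Lam_apply_norm_sq)
  also have "\<dots> = (sqrt 2 + 1) * supnorm (rectE a b c d) x * L2_set (\<lambda>e. cmod (v e)) (rectD a b c d)"
    using s0 by (simp add: real_sqrt_mult L2_set_def add.commute)
  finally show ?thesis .
qed

definition edge_prod :: "(vert set \<Rightarrow> complex) \<Rightarrow> vert list \<Rightarrow> complex" where
  "edge_prod x vs = (\<Prod>i<length vs. x {vs ! i, vs ! ((i + 1) mod length vs)})"

definition turn_factor3 :: "vert \<Rightarrow> vert \<Rightarrow> vert \<Rightarrow> complex" where
  "turn_factor3 p q r = exp (\<i> * of_real (turn (vdiff q p) (vdiff r q) / 2))"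

definition turn_factor :: "vert list \<Rightarrow> nat \<Rightarrow> complex" where
  "turn_factor vs i = turn_factor3 (vs ! i) (vs ! ((i + 1) mod length vs)) (vs ! ((i + 2) mod length vs))"

definition path_weight :: "(vert set \<Rightarrow> complex) \<Rightarrow> vert list \<Rightarrow> complex" where
  "path_weight x vs = lsgn vs * edge_prod x vs"

lemma lsgn_turn_factors: "lsgn vs = - (\<Prod>i<length vs. turn_factor vs i)"
proof -
  have "\<i> * complex_of_real (winding vs / 2) =
      (\<Sum>i<length vs. \<i> * of_real (turn (vdiff (vs ! ((i + 1) mod length vs)) (vs ! i))
        (vdiff (vs ! ((i + 2) mod length vs)) (vs ! ((i + 1) mod length vs))) / 2))"
    by (simp add: winding_def Let_def sum_divide_distrib sum_distrib_left)
  then show ?thesis by (simp add: lsgn_def exp_sum turn_factor_def turn_factor3_def)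
qed

lemma mod_Suc_Suc: "Suc (Suc i) mod n = ((i + 1) mod n + 1) mod (n::nat)"
  by (simp add: mod_Suc_eq)

lemma mod_add_1_add_1: "((k + 1) mod n + 1) mod n = (k + 2) mod (n::nat)"
  using mod_Suc_Suc[of k n] by (simp add: numeral_2_eq_2)

lemma closed_path_length: "closed_path a b c d vs \<Longrightarrow> 0 < length vs"
  by (simp add: closed_path_def)

lemma closed_pathD:
  assumes "closed_path a b c d vs" "i < length vs"
  shows "radj a b c d (vs ! i) (vs ! ((i + 1) mod length vs))"
        "radj a b c d (vs ! ((i + 1) mod length vs)) (vs ! ((i + 2) mod length vs))"
        "vs ! ((i + 2) mod length vs) \<noteq> vs ! i"
proof -
  have all: "\<forall>i < length vs. radj a b c d (vs ! i) (vs ! ((i + 1) mod length vs)) \<and>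
                      vs ! ((i + 2) mod length vs) \<noteq> vs ! i"
    using assms(1) unfolding closed_path_def by blast
  show "radj a b c d (vs ! i) (vs ! ((i + 1) mod length vs))"
       "vs ! ((i + 2) mod length vs) \<noteq> vs ! i"
    using all assms(2) by blast+
  have "0 < length vs" using assms(2) by linarith
  then have "(i + 1) mod length vs < length vs" by simp
  then show "radj a b c d (vs ! ((i + 1) mod length vs)) (vs ! ((i + 2) mod length vs))"
    using all mod_add_1_add_1[of i "length vs"] by metis
qed

lemma closed_path_set: "closed_path a b c d vs \<Longrightarrow> set vs \<subseteq> rectV a b c d"
proof
  fix v assume cp: "closed_path a b c d vs" and "v \<in> set vs"
  then obtain i where i: "i < length vs" "vs ! i = v" by (auto simp: in_set_conv_nth)
  then show "v \<in> rectV a b c d" using closed_pathD(1)[OF cp i(1)] by (simp add: radj_def)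
qed

lemma closed_path_length_ge_2: "closed_path a b c d vs \<Longrightarrow> 2 \<le> length vs"
proof (rule ccontr)
  assume cp: "closed_path a b c d vs" and "\<not> 2 \<le> length vs"
  moreover have "0 < length vs" by (rule closed_path_length[OF cp])
  ultimately have "length vs = 1" by linarith
  then have "radj a b c d (vs ! 0) (vs ! 0)" using closed_pathD(1)[OF cp, of 0] by simp
  then show False using radj_ne by blast
qed

definition closed_paths :: "int \<Rightarrow> int \<Rightarrow> int \<Rightarrow> int \<Rightarrow> nat \<Rightarrow> vert list set" where
  "closed_paths a b c d r = {vs. closed_path a b c d vs \<and> length vs = r}"

lemma closed_paths_words: "closed_paths a b c d r \<subseteq> words (rectV a b c d) r"
  by (auto simp: closed_paths_def words_def dest: closed_path_set)

lemma finite_closed_paths: "finite (closed_paths a b c d r)"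
  using finite_subset[OF closed_paths_words finite_words[OF finite_rectV]] .

lemma cyc_edge_simps:
  assumes "i < length vs"
  shows "cyc_edge vs i = (vs ! i, vs ! ((i + 1) mod length vs))"
        "cyc_edge vs (Suc i) = (vs ! ((i + 1) mod length vs), vs ! ((i + 2) mod length vs))"
  using assms mod_add_1_add_1[of i "length vs"] by (simp_all add: cyc_edge_def)

text \<open>Along a closed path every factor of the cyclic product of Lambda(x) is an edge weight
  times a half-turn factor, so the product is -sgn times the edge product.\<close>
lemma cyc_prod_closed:
  assumes "closed_path a b c d vs"
  shows "cyc_prod (Lam a b c d x) vs = - path_weight x vs"
proof -
  have "cyc_prod (Lam a b c d x) vs =
      (\<Prod>i<length vs. x {vs ! i, vs ! ((i + 1) mod length vs)} * turn_factor vs i)"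
    unfolding cyc_prod_def
  proof (rule prod.cong)
    fix i assume "i \<in> {..<length vs}"
    then have i: "i < length vs" by simp
    show "Lam a b c d x (cyc_edge vs i) (cyc_edge vs (Suc i)) =
        x {vs ! i, vs ! ((i + 1) mod length vs)} * turn_factor vs i"
      using closed_pathD[OF assms i]
      by (simp add: cyc_edge_simps[OF i] Lam_def rectD_def turn_factor_def turn_factor3_def)
  qed simp
  also have "\<dots> = edge_prod x vs * (\<Prod>i<length vs. turn_factor vs i)"
    by (simp add: prod.distrib edge_prod_def)
  finally show ?thesis by (simp add: lsgn_turn_factors path_weight_def)
qed

lemma cyc_prod_nonclosed:
  assumes "vs \<noteq> []" "\<not> closed_path a b c d vs"
  shows "cyc_prod (Lam a b c d x) vs = 0"
proof -
  obtain i where i: "i < length vs" and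
    bad: "\<not> radj a b c d (vs ! i) (vs ! ((i + 1) mod length vs)) \<or> vs ! ((i + 2) mod length vs) = vs ! i"
    using assms unfolding closed_path_def by blast
  have "Lam a b c d x (cyc_edge vs i) (cyc_edge vs (Suc i)) = 0"
    using bad by (auto simp: cyc_edge_simps[OF i] Lam_def rectD_def)
  then show ?thesis unfolding cyc_prod_def using i by (subst prod_zero_iff) auto
qed

lemma sum_cyc_prod_Lam:
  assumes "1 \<le> r"
  shows "(\<Sum>vs\<in>words (rectV a b c d) r. cyc_prod (Lam a b c d x) vs) =
         - (\<Sum>vs\<in>closed_paths a b c d r. path_weight x vs)"
proof -
  have "(\<Sum>vs\<in>words (rectV a b c d) r. cyc_prod (Lam a b c d x) vs) =
      (\<Sum>vs\<in>closed_paths a b c d r. cyc_prod (Lam a b c d x) vs)"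
  proof (rule sum.mono_neutral_right[OF finite_words[OF finite_rectV] closed_paths_words], rule ballI)
    fix vs assume "vs \<in> words (rectV a b c d) r - closed_paths a b c d r"
    then have "vs \<noteq> []" "\<not> closed_path a b c d vs" using assms by (auto simp: words_def closed_paths_def)
    then show "cyc_prod (Lam a b c d x) vs = 0" by (rule cyc_prod_nonclosed)
  qed
  also have "\<dots> = (\<Sum>vs\<in>closed_paths a b c d r. - path_weight x vs)"
    by (rule sum.cong) (simp_all add: closed_paths_def cyc_prod_closed)
  finally show ?thesis by (simp add: sum_negf)
qed

section \<open>Invariance of the weight under rotation and reversal\<close>

lemma shift_inj:
  assumes "(k + i) mod n = (k + j) mod (n::nat)" "i < n" "j < n"
  shows "i = j"
proof -
  have *: "i = j" if "i \<le> j" "j < n" "(k + i) mod n = (k + j) mod n" for i j :: nat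
  proof (rule ccontr)
    assume "i \<noteq> j"
    have "n dvd (k + j) - (k + i)" using mod_eq_dvd_iff_nat[of "k+i" "k+j" n] that by simp
    then have "n dvd j - i" by simp
    moreover have "0 < j - i" using that \<open>i \<noteq> j\<close> by simp
    ultimately have "n \<le> j - i" by (rule dvd_imp_le)
    then show False using that by simp
  qed
  show ?thesis using *[of i j] *[of j i] assms by (metis nat_le_linear)
qed

lemma bij_shift: "0 < n \<Longrightarrow> bij_betw (\<lambda>j. (k + j) mod n) {..<n} {..<(n::nat)}"
  unfolding bij_betw_def
proof
  assume n: "0 < n"
  show inj: "inj_on (\<lambda>j. (k + j) mod n) {..<n}" by (rule inj_onI) (auto dest: shift_inj)
  show "(\<lambda>j. (k + j) mod n) ` {..<n} = {..<n}"
    by (rule endo_inj_surj[OF _ _ inj]) (use n in auto)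
qed

text \<open>Index arithmetic for reversal: position (j + k) counted from the end.\<close>
lemma rev_index:
  assumes "j < n" "k \<le> (n::nat)"
  shows "n - 1 - (j + k) mod n = (2 * n - 1 - k - j) mod n"
proof (cases "j + k < n")
  case True
  have eq: "2 * n - 1 - k - j = (n - 1 - k - j) + n" using True by simp
  show ?thesis unfolding eq mod_add_self2 using True by simp
next
  case False
  then have "(j + k) mod n = j + k - n" using assms by (simp add: le_mod_geq)
  moreover have "2 * n - 1 - k - j < n" using False assms by linarith
  ultimately show ?thesis using assms by simp
qed

lemma turn_factor3_reverse:
  assumes "radj a b c d p q" "radj a b c d q r" "r \<noteq> p"
  shows "turn_factor3 r q p = cnj (turn_factor3 p q r)"
proof -
  obtain j k where jk: "j < 4" "k < 4" "vdiff q p = udir j" "vdiff r q = udir k" "k \<noteq> (j + 2) mod 4"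
    using radj_pair_dirs[OF assms] .
  have a1: "vdiff q r = udir ((k + 2) mod 4)" by (rule vdiff_swap_udir[OF jk(2,4)])
  have a2: "vdiff p q = udir ((j + 2) mod 4)" by (rule vdiff_swap_udir[OF jk(1,3)])
  have "((k + 2) mod 4 + 2) mod 4 = (k + 4) mod 4" by (simp only: mod_add_left_eq) (simp add: add.assoc)
  also have "\<dots> = k" using jk(2) by simp
  finally have ne: "(j + 2) mod 4 \<noteq> ((k + 2) mod 4 + 2) mod 4" using jk(5) by simp
  have "turn_factor3 r q p = hturn ((k + 2) mod 4) ((j + 2) mod 4)"
    unfolding turn_factor3_def a1 a2 by (rule exp_half_turn) (use ne in simp_all)
  also have "\<dots> = cnj (hturn j k)" by (rule hturn_reverse[OF jk(1,2)])
  also have "hturn j k = turn_factor3 p q r"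
    unfolding turn_factor3_def jk(3,4) by (rule exp_half_turn[OF jk(1,2,5), symmetric])
  finally show ?thesis .
qed

text \<open>The product of the half-turn factors of a closed path squares to 1: each factor squares
  to the ratio of consecutive directions, and these ratios telescope.\<close>
lemma turn_factors_square:
  assumes cp: "closed_path a b c d vs"
  shows "(\<Prod>i<length vs. turn_factor vs i)\<^sup>2 = 1"
proof -
  define n where "n = length vs"
  have n0: "0 < n" using closed_path_length[OF cp] by (simp add: n_def)
  define om where "om = (\<lambda>i. cpt (udir (dir_idx (vdiff (vs ! ((i + 1) mod n)) (vs ! i)))))"
  have sq: "(turn_factor vs i)\<^sup>2 = om ((i + 1) mod n) / om i" if i: "i < n" for i
  proof -
    have i': "i < length vs" using i by (simp add: n_def)
    obtain j k where jk: "j < 4" "k < 4" "vdiff (vs ! ((i + 1) mod n)) (vs ! i) = udir j"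
        "vdiff (vs ! ((i + 2) mod n)) (vs ! ((i + 1) mod n)) = udir k" "k \<noteq> (j + 2) mod 4"
      using radj_pair_dirs[OF closed_pathD[OF cp i']] unfolding n_def by blast
    have c: "turn_factor vs i = hturn j k"
      unfolding turn_factor_def turn_factor3_def n_def[symmetric] jk(3,4) by (rule exp_half_turn[OF jk(1,2,5)])
    have "om ((i + 1) mod n) = cpt (udir k)"
      using jk(4) mod_add_1_add_1[of i n] by (simp add: om_def dir_idx_udir[OF jk(2)])
    moreover have "om i = cpt (udir j)" using jk(3) by (simp add: om_def dir_idx_udir[OF jk(1)])
    ultimately show ?thesis using c hturn_square[OF jk(1,2,5)] by simp
  qed
  have nz: "om i \<noteq> 0" for i unfolding om_def by (rule cpt_udir_nonzero[OF dir_idx_lt])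
  have "(\<Prod>i<length vs. turn_factor vs i)\<^sup>2 = (\<Prod>i<n. (turn_factor vs i)\<^sup>2)"
    by (simp add: n_def prod_power_distrib)
  also have "\<dots> = (\<Prod>i<n. om ((i + 1) mod n) / om i)"
    by (rule prod.cong) (simp_all add: sq)
  also have "\<dots> = (\<Prod>i<n. om ((i + 1) mod n)) / (\<Prod>i<n. om i)"
    by (rule prod_dividef)
  also have "(\<Prod>i<n. om ((i + 1) mod n)) = (\<Prod>i<n. om i)"
    using prod.reindex_bij_betw[OF bij_shift[OF n0, of 1], of om] by (simp add: add.commute)
  also have "(\<Prod>i<n. om i) / (\<Prod>i<n. om i) = 1"
    using nz by (simp add: prod_zero_iff)
  finally show ?thesis .
qed

lemma turn_factors_real:
  assumes "closed_path a b c d vs"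
  shows "cnj (\<Prod>i<length vs. turn_factor vs i) = (\<Prod>i<length vs. turn_factor vs i)"
proof -
  have "(\<Prod>i<length vs. turn_factor vs i) = 1 \<or> (\<Prod>i<length vs. turn_factor vs i) = -1"
    using turn_factors_square[OF assms] by (simp add: power2_eq_1_iff)
  then show ?thesis by (metis complex_cnj_one complex_cnj_minus)
qed

lemma window_transfer:
  assumes cp: "closed_path a b c d vs" and len: "length w = length vs"
    and bij: "bij_betw \<sigma> {..<length vs} {..<length vs}"
    and win: "\<And>j. j < length vs \<Longrightarrow> w ! j = vs ! \<sigma> j \<and>
        w ! ((j + 1) mod length vs) = vs ! ((\<sigma> j + 1) mod length vs) \<and>
        w ! ((j + 2) mod length vs) = vs ! ((\<sigma> j + 2) mod length vs)"
  shows "closed_path a b c d w \<and> path_weight x w = path_weight x vs"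
proof -
  define n where "n = length vs"
  have sl: "\<sigma> j < length vs" if "j < n" for j using bij_betwE[OF bij] that by (auto simp: n_def)
  have "closed_path a b c d w"
    unfolding closed_path_def
  proof (intro conjI allI impI)
    show "w \<noteq> []" using len closed_path_length[OF cp] by auto
    fix j assume "j < length w"
    then have j: "j < n" using len by (simp add: n_def)
    show "radj a b c d (w ! j) (w ! ((j + 1) mod length w))"
      using closed_pathD(1)[OF cp sl[OF j]] win[of j] j len by (simp add: n_def)
    show "w ! ((j + 2) mod length w) \<noteq> w ! j"
      using closed_pathD(3)[OF cp sl[OF j]] win[of j] j len by (simp add: n_def)
  qed
  moreover have "edge_prod x w = edge_prod x vs"
  proof -
    have "edge_prod x w = (\<Prod>j<n. (\<lambda>k. x {vs ! k, vs ! ((k + 1) mod n)}) (\<sigma> j))"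
      unfolding edge_prod_def len n_def[symmetric] by (rule prod.cong) (use win in \<open>simp_all add: n_def\<close>)
    also have "\<dots> = edge_prod x vs"
      unfolding edge_prod_def n_def by (rule prod.reindex_bij_betw[OF bij])
    finally show ?thesis .
  qed
  moreover have "(\<Prod>i<length w. turn_factor w i) = (\<Prod>i<length vs. turn_factor vs i)"
  proof -
    have "(\<Prod>i<length w. turn_factor w i) = (\<Prod>j<n. turn_factor vs (\<sigma> j))"
      unfolding len n_def[symmetric] by (rule prod.cong) (use win len in \<open>simp_all add: n_def turn_factor_def\<close>)
    also have "\<dots> = (\<Prod>i<length vs. turn_factor vs i)"
      unfolding n_def by (rule prod.reindex_bij_betw[OF bij])
    finally show ?thesis .
  qed
  ultimately show ?thesis by (simp add: path_weight_def lsgn_turn_factors)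
qed

text \<open>If every window of w is the reversed window of vs at rho j, for a permutation rho,
  then w is a closed path of the same weight: its half-turn factors are conjugated, which does
  not change their (real) product.\<close>
lemma window_transfer_reversed:
  assumes cp: "closed_path a b c d vs" and len: "length w = length vs"
    and bij: "bij_betw \<rho> {..<length vs} {..<length vs}"
    and win: "\<And>j. j < length vs \<Longrightarrow> w ! j = vs ! ((\<rho> j + 2) mod length vs) \<and>
        w ! ((j + 1) mod length vs) = vs ! ((\<rho> j + 1) mod length vs) \<and>
        w ! ((j + 2) mod length vs) = vs ! \<rho> j"
  shows "closed_path a b c d w \<and> path_weight x w = path_weight x vs"
proof -
  define n where "n = length vs"
  have n0: "0 < n" using closed_path_length[OF cp] by (simp add: n_def)
  have rl: "\<rho> j < length vs" if "j < n" for j using bij_betwE[OF bij] that by (auto simp: n_def)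
  have "closed_path a b c d w"
    unfolding closed_path_def
  proof (intro conjI allI impI)
    show "w \<noteq> []" using len n0 by (auto simp: n_def)
    fix j assume "j < length w"
    then have j: "j < n" using len by (simp add: n_def)
    show "radj a b c d (w ! j) (w ! ((j + 1) mod length w))"
      using radj_sym[OF closed_pathD(2)[OF cp rl[OF j]]] win[of j] j len by (simp add: n_def)
    show "w ! ((j + 2) mod length w) \<noteq> w ! j"
      using closed_pathD(3)[OF cp rl[OF j]] win[of j] j len by (simp add: n_def)
  qed
  moreover have "edge_prod x w = edge_prod x vs"
  proof -
    have bij1: "bij_betw (\<lambda>j. (1 + \<rho> j) mod n) {..<n} {..<n}"
      using bij_betw_trans[OF bij[folded n_def] bij_shift[OF n0, of 1]] by (simp add: comp_def n_def)
    have "edge_prod x w = (\<Prod>j<n. (\<lambda>k. x {vs ! k, vs ! ((k + 1) mod n)}) ((1 + \<rho> j) mod n))"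
      unfolding edge_prod_def len n_def[symmetric]
      by (rule prod.cong) (use win mod_add_1_add_1 in \<open>simp_all add: n_def insert_commute add.commute\<close>)
    also have "\<dots> = edge_prod x vs"
      unfolding edge_prod_def n_def[symmetric] by (rule prod.reindex_bij_betw[OF bij1])
    finally show ?thesis .
  qed
  moreover have "(\<Prod>i<length w. turn_factor w i) = (\<Prod>i<length vs. turn_factor vs i)"
  proof -
    have "(\<Prod>i<length w. turn_factor w i) = (\<Prod>j<n. cnj (turn_factor vs (\<rho> j)))"
      unfolding len n_def[symmetric]
    proof (rule prod.cong)
      fix j assume "j \<in> {..<n}"
      then have j: "j < n" by simp
      show "turn_factor w j = cnj (turn_factor vs (\<rho> j))"
        using turn_factor3_reverse[OF closed_pathD[OF cp rl[OF j]]] win[OF j[unfolded n_def]] len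
        by (simp add: n_def turn_factor_def)
    qed simp
    also have "\<dots> = cnj (\<Prod>i<length vs. turn_factor vs i)"
      unfolding n_def using prod.reindex_bij_betw[OF bij, of "\<lambda>i. cnj (turn_factor vs i)"] by simp
    finally show ?thesis using turn_factors_real[OF cp] by simp
  qed
  ultimately show ?thesis by (simp add: path_weight_def lsgn_turn_factors)
qed

lemma rotate_closed_path:
  assumes cp: "closed_path a b c d vs"
  shows "closed_path a b c d (rotate k vs) \<and> path_weight x (rotate k vs) = path_weight x vs"
proof (rule window_transfer[OF cp _ bij_shift])
  show "0 < length vs" by (rule closed_path_length[OF cp])
  fix j assume j: "j < length vs"
  have L: "0 < length vs" using j by linarith
  have rot: "rotate k vs ! ((j + i) mod length vs) = vs ! (((k + j) mod length vs + i) mod length vs)" for i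
  proof -
    have "rotate k vs ! ((j + i) mod length vs) = vs ! ((k + (j + i) mod length vs) mod length vs)"
      by (rule nth_rotate) (rule mod_less_divisor[OF L])
    also have "(k + (j + i) mod length vs) mod length vs = ((k + j) mod length vs + i) mod length vs"
      by (simp only: mod_add_right_eq mod_add_left_eq add.assoc)
    finally show ?thesis .
  qed
  show "rotate k vs ! j = vs ! ((k + j) mod length vs) \<and>
      rotate k vs ! ((j + 1) mod length vs) = vs ! (((k + j) mod length vs + 1) mod length vs) \<and>
      rotate k vs ! ((j + 2) mod length vs) = vs ! (((k + j) mod length vs + 2) mod length vs)"
    using rot[of 0] rot[of 1] rot[of 2] j by simp
qed simp

lemma rev_closed_path:
  assumes cp: "closed_path a b c d vs"
  shows "closed_path a b c d (rev vs) \<and> path_weight x (rev vs) = path_weight x vs"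
proof -
  define n where "n = length vs"
  have n2: "2 \<le> n" using closed_path_length_ge_2[OF cp] by (simp add: n_def)
  define \<rho> where "\<rho> = (\<lambda>j. n - 1 - (j + 2) mod n)"
  have \<rho>_lt: "\<rho> j < n" for j using n2 by (simp add: \<rho>_def)
  have \<rho>_add: "(\<rho> j + t) mod n = n - 1 - (j + (2 - t)) mod n" if j: "j < n" and t: "t \<le> 2" for j t
  proof -
    have "(\<rho> j + t) mod n = ((2 * n - 1 - 2 - j) mod n + t) mod n"
      unfolding \<rho>_def using rev_index[OF j, of 2] n2 by simp
    also have "\<dots> = (2 * n - 1 - 2 - j + t) mod n"
      by (simp add: mod_add_left_eq)
    also have "2 * n - 1 - 2 - j + t = 2 * n - 1 - (2 - t) - j"
      using j t n2 by linarith
    also have "(2 * n - 1 - (2 - t) - j) mod n = n - 1 - (j + (2 - t)) mod n"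
      by (rule rev_index[OF j, symmetric]) (use t n2 in simp)
    finally show ?thesis .
  qed
  have inj: "inj_on \<rho> {..<n}"
  proof (rule inj_onI)
    fix i j assume ij: "i \<in> {..<n}" "j \<in> {..<n}" "\<rho> i = \<rho> j"
    have "n - 1 - (i + 2) mod n = n - 1 - (j + 2) mod n" using ij(3) by (simp add: \<rho>_def)
    moreover have "(i + 2) mod n < n" "(j + 2) mod n < n" using n2 by simp_all
    ultimately have "(i + 2) mod n = (j + 2) mod n" by linarith
    then have "(2 + i) mod n = (2 + j) mod n" by (simp only: add.commute)
    then show "i = j" using ij shift_inj by blast
  qed
  have bij: "bij_betw \<rho> {..<n} {..<n}"
    unfolding bij_betw_def using inj by (auto intro!: endo_inj_surj[OF _ _ inj] simp: \<rho>_lt)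
  show ?thesis
  proof (rule window_transfer_reversed[OF cp _ bij[unfolded n_def]])
    fix j assume j: "j < length vs"
    then have jn: "j < n" by (simp add: n_def)
    have e2: "(\<rho> j + 2) mod n = n - 1 - j" using \<rho>_add[OF jn, of 2] jn by simp
    have e1: "(\<rho> j + 1) mod n = n - 1 - (j + 1) mod n" using \<rho>_add[OF jn, of 1] by simp
    have e0: "\<rho> j = n - 1 - (j + 2) mod n" by (simp add: \<rho>_def)
    have rev_at: "rev vs ! k = vs ! (n - 1 - k)" if "k < n" for k
      using that by (simp add: rev_nth n_def)
    have "(j + 1) mod n < n" "(j + 2) mod n < n" using n2 by simp_all
    then have "rev vs ! j = vs ! ((\<rho> j + 2) mod n) \<and>
        rev vs ! ((j + 1) mod n) = vs ! ((\<rho> j + 1) mod n) \<and>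
        rev vs ! ((j + 2) mod n) = vs ! \<rho> j"
      using rev_at jn e0 e1 e2 by presburger
    then show "rev vs ! j = vs ! ((\<rho> j + 2) mod length vs) \<and>
        rev vs ! ((j + 1) mod length vs) = vs ! ((\<rho> j + 1) mod length vs) \<and>
        rev vs ! ((j + 2) mod length vs) = vs ! \<rho> j"
      by (simp only: n_def)
  qed simp
qed

section \<open>Dihedral orbits\<close>

lemma rev_rot: "\<exists>k'. rev (rotate k xs) = rotate k' (rev xs)"
proof (cases "xs = []")
  case True then show ?thesis by simp
next
  case False
  define L where "L = length xs"
  have L0: "0 < L" using False by (simp add: L_def)
  define m where "m = k mod L"
  have mL: "m < L" using L0 by (simp add: m_def)
  have rk: "rotate k xs = rotate m xs" by (simp add: rotate_conv_mod[of k] m_def L_def)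
  have "rotate (L - m) (rev xs) = rev (rotate (L - (L - m) mod L) xs)"
    by (simp add: rotate_rev L_def)
  also have "rotate (L - (L - m) mod L) xs = rotate m xs"
  proof (cases "m = 0")
    case True then show ?thesis by (simp add: L_def)
  next
    case False
    then have "(L - m) mod L = L - m" using mL by simp
    then show ?thesis using mL by simp
  qed
  finally show ?thesis using rk by metis
qed

lemma rot_back: "\<exists>j. rotate j (rotate k xs) = xs"
proof (cases "xs = []")
  case True then show ?thesis by simp
next
  case False
  define L where "L = length xs"
  have L0: "0 < L" using False by (simp add: L_def)
  have "rotate (L - k mod L) (rotate k xs) = rotate (L - k mod L + k) xs" by (simp add: rotate_rotate)
  also have "\<dots> = xs"
  proof (rule rotate_id)
    have "(L - k mod L + k) mod L = (L - k mod L + k mod L) mod L" by (simp add: mod_add_right_eq)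
    also have "L - k mod L + k mod L = L" using L0 by (simp add: less_imp_le)
    finally show "(L - k mod L + k) mod length xs = 0" by (simp add: L_def)
  qed
  finally show ?thesis by blast
qed

definition dorbit :: "'a list \<Rightarrow> 'a list set" where
  "dorbit l = range (\<lambda>k. rotate k l) \<union> range (\<lambda>k. rotate k (rev l))"

lemma dorbit_self: "l \<in> dorbit l"
  unfolding dorbit_def by (metis UnI1 rangeI rotate0 id_apply)

text \<open>Orbits are closed and symmetric, so two orbits are equal or disjoint.\<close>
lemma dorbit_closed: assumes "u \<in> dorbit l" shows "dorbit u \<subseteq> dorbit l"
proof -
  have R1: "rotate j (rotate k l) \<in> dorbit l" for j k by (simp add: dorbit_def rotate_rotate)
  have R2: "rotate j (rotate k (rev l)) \<in> dorbit l" for j k by (simp add: dorbit_def rotate_rotate)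
  show ?thesis
  proof
    fix v assume v: "v \<in> dorbit u"
    then obtain j where vj: "v = rotate j u \<or> v = rotate j (rev u)" by (auto simp: dorbit_def)
    from assms obtain k where "u = rotate k l \<or> u = rotate k (rev l)" by (auto simp: dorbit_def)
    then show "v \<in> dorbit l"
    proof
      assume u: "u = rotate k l"
      obtain k' where k': "rev (rotate k l) = rotate k' (rev l)" using rev_rot by blast
      from vj show ?thesis unfolding u k' using R1 R2 by blast
    next
      assume u: "u = rotate k (rev l)"
      obtain k' where k': "rev (rotate k (rev l)) = rotate k' l"
        using rev_rot[of k "rev l"] by auto
      from vj show ?thesis unfolding u k' using R1 R2 by blast
    qed
  qed
qed

lemma dorbit_sym: assumes "u \<in> dorbit l" shows "l \<in> dorbit u"
proof -
  from assms obtain k where "u = rotate k l \<or> u = rotate k (rev l)" by (auto simp: dorbit_def)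
  then show ?thesis
  proof
    assume u: "u = rotate k l"
    obtain j where "rotate j (rotate k l) = l" using rot_back by blast
    then show ?thesis unfolding u dorbit_def by (metis UnI1 rangeI)
  next
    assume u: "u = rotate k (rev l)"
    obtain k' where k': "rev u = rotate k' l"
      using rev_rot[of k "rev l"] u by auto
    obtain j where "rotate j (rotate k' l) = l" using rot_back by blast
    then have "rotate j (rev u) = l" using k' by simp
    then show ?thesis unfolding dorbit_def by (metis UnI2 rangeI)
  qed
qed

definition rot_period :: "'a list \<Rightarrow> nat" where
  "rot_period l = (LEAST p. 0 < p \<and> rotate p l = l)"

lemma rot_mult: "rotate p l = l \<Longrightarrow> rotate (q * p) l = l"
proof (induction q)
  case 0 then show ?case by simp
next
  case (Suc q)
  have "rotate (Suc q * p) l = rotate p (rotate (q * p) l)" by (simp add: rotate_rotate add.commute)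
  then show ?case using Suc by simp
qed

lemma rot_mod: "rotate p l = l \<Longrightarrow> rotate k l = rotate (k mod p) l"
proof -
  assume p: "rotate p l = l"
  have "rotate k l = rotate (k mod p + (k div p) * p) l" by simp
  also have "\<dots> = rotate (k mod p) (rotate ((k div p) * p) l)" by (simp add: rotate_rotate)
  also have "\<dots> = rotate (k mod p) l" using rot_mult[OF p] by simp
  finally show ?thesis .
qed

lemma rot_period_props:
  assumes n0: "0 < length l"
  shows "0 < rot_period l" "rotate (rot_period l) l = l" "rot_period l \<le> length l" "rot_period l dvd length l"
proof -
  have ex: "0 < length l \<and> rotate (length l) l = l" using n0 by simp
  show p0: "0 < rot_period l" and pr: "rotate (rot_period l) l = l"
    unfolding rot_period_def using LeastI[of "\<lambda>p. 0 < p \<and> rotate p l = l", OF ex] by auto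
  show "rot_period l \<le> length l" unfolding rot_period_def by (rule Least_le[of "\<lambda>p. 0 < p \<and> rotate p l = l", OF ex])
  have "rotate (length l mod rot_period l) l = l"
    using rot_mod[OF pr, of "length l"] by simp
  moreover have "\<not> (0 < length l mod rot_period l \<and> rotate (length l mod rot_period l) l = l)"
  proof -
    have "length l mod rot_period l < rot_period l" using p0 by simp
    then show ?thesis unfolding rot_period_def using not_less_Least by blast
  qed
  ultimately show "rot_period l dvd length l" by (simp add: dvd_eq_mod_eq_0)
qed

lemma card_rotations:
  assumes n0: "0 < length l"
  shows "card (range (\<lambda>k. rotate k l)) = rot_period l"
proof -
  note P = rot_period_props[OF n0]
  have eq: "range (\<lambda>k. rotate k l) = (\<lambda>k. rotate k l) ` {..<rot_period l}"
  proof
    show "range (\<lambda>k. rotate k l) \<subseteq> (\<lambda>k. rotate k l) ` {..<rot_period l}"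
    proof
      fix u assume "u \<in> range (\<lambda>k. rotate k l)"
      then obtain k where "u = rotate k l" by blast
      then have "u = rotate (k mod rot_period l) l" using rot_mod[OF P(2)] by simp
      moreover have "k mod rot_period l < rot_period l" using P(1) by simp
      ultimately show "u \<in> (\<lambda>k. rotate k l) ` {..<rot_period l}" by blast
    qed
  qed auto
  have inj: "inj_on (\<lambda>k. rotate k l) {..<rot_period l}"
  proof -
    have *: "i = j" if ij: "i \<le> j" "j < rot_period l" "rotate i l = rotate j l" for i j
    proof (rule ccontr)
      assume "i \<noteq> j"
      obtain t where t: "rotate t (rotate i l) = l" using rot_back by blast
      have "rotate t (rotate j l) = rotate (j - i) (rotate t (rotate i l))"
        using ij(1) by (simp add: rotate_rotate add.commute add.left_commute)
      then have "rotate (j - i) l = l" using t ij(3) by simp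
      moreover have "0 < j - i" "j - i < rot_period l" using ij \<open>i \<noteq> j\<close> by auto
      ultimately show False unfolding rot_period_def using not_less_Least by blast
    qed
    show ?thesis by (rule inj_onI) (metis lessThan_iff nat_le_linear *)
  qed
  show ?thesis unfolding eq using card_image[OF inj] by simp
qed

text \<open>The reversal of a closed path is never one of its rotations: a reflection of the cycle
  would map some vertex to a neighbour (impossible, since consecutive vertices differ) or to the
  vertex two steps away (excluded by non-backtracking).\<close>
lemma rev_not_rotation:
  assumes cp: "closed_path a b c d l"
  shows "rev l \<noteq> rotate m l"
proof
  assume H: "rev l = rotate m l"
  define L where "L = length l"
  have L0: "0 < L" using closed_path_length[OF cp] by (simp add: L_def)
  have mirror: "l ! (L - 1 - i) = l ! ((m mod L + i) mod L)" if "i < L" for i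
  proof -
    have "rev l ! i = rotate m l ! i" using H by simp
    then show ?thesis using that by (simp add: rev_nth nth_rotate L_def mod_add_left_eq)
  qed
  have neighbours_differ: False if i: "i < L" and e: "l ! (L - 1 - i) = l ! ((L - i) mod L)" for i
  proof -
    have t: "L - 1 - i < length l" using i by (simp add: L_def)
    have "(L - 1 - i + 1) = L - i" using i by simp
    then have "radj a b c d (l ! (L - 1 - i)) (l ! ((L - i) mod L))"
      using closed_pathD(1)[OF cp t] by (simp add: L_def)
    then show False using e radj_ne by metis
  qed
  have no_backtrack: False if i: "i < L" and e: "l ! (L - 1 - i) = l ! ((L + 1 - i) mod L)" for i
  proof -
    have t: "L - 1 - i < length l" using i by (simp add: L_def)
    have "(L - 1 - i + 2) = L + 1 - i" using i by simp
    then have "l ! ((L + 1 - i) mod L) \<noteq> l ! (L - 1 - i)"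
      using closed_pathD(3)[OF cp t] by (simp add: L_def)
    then show False using e by simp
  qed
  define m' where "m' = m mod L"
  have m'L: "m' < L" using L0 by (simp add: m'_def)
  show False
  proof (cases "m' = 0")
    case True
    then show False using mirror[of 0] neighbours_differ[of 0] L0 by (simp add: m'_def)
  next
    case False
    show False
    proof (cases "m' = 1")
      case True
      have e1: "(L + 1 - 0) mod L = 1 mod L" by (metis diff_zero mod_add_self1)
      have e2: "(m mod L + 0) mod L = 1 mod L" using True by (simp add: m'_def)
      show False using mirror[OF L0] no_backtrack[OF L0] e1 e2 by metis
    next
      case False
      then have m2: "2 \<le> m'" using \<open>m' \<noteq> 0\<close> by simp
      show False
      proof (cases "even (L - m')")
        case True
        define i where "i = (L - m') div 2"
        have "2 * i = L - m'" using True by (simp add: i_def)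
        then have i: "i < L" "m' + i = L - i" using m2 m'L by auto
        then show False using mirror[OF i(1)] neighbours_differ[OF i(1)] by (simp add: m'_def)
      next
        case False
        define i where "i = (L - m' + 1) div 2"
        have "2 * i = L - m' + 1" using False m'L by (simp add: i_def)
        then have i: "i < L" "m' + i = L + 1 - i" using m2 m'L by auto
        then show False using mirror[OF i(1)] no_backtrack[OF i(1)] by (simp add: m'_def)
      qed
    qed
  qed
qed

lemma dorbit_props:
  assumes cp: "closed_path a b c d l" and u: "u \<in> dorbit l"
  shows "closed_path a b c d u" "length u = length l" "path_weight x u = path_weight x l"
proof -
  from u obtain k where "u = rotate k l \<or> u = rotate k (rev l)" by (auto simp: dorbit_def)
  then show "closed_path a b c d u" "length u = length l" "path_weight x u = path_weight x l"
    using rotate_closed_path[OF cp] rev_closed_path[OF cp] rotate_closed_path[of a b c d "rev l"]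
    by auto
qed

text \<open>The orbit of a closed path l has 2 rot_period l elements: the rotations of l and of
  rev l are disjoint families.\<close>
lemma card_dorbit:
  assumes cp: "closed_path a b c d l"
  shows "card (dorbit l) = 2 * rot_period l"
proof -
  have n0: "0 < length l" by (rule closed_path_length[OF cp])
  define R1 where "R1 = range (\<lambda>k. rotate k l)"
  define R2 where "R2 = range (\<lambda>k. rotate k (rev l))"
  have R2eq: "R2 = rev ` R1"
  proof
    show "R2 \<subseteq> rev ` R1"
      unfolding R1_def R2_def by (auto simp: rotate_rev)
    show "rev ` R1 \<subseteq> R2"
      unfolding R1_def R2_def using rev_rot by blast
  qed
  have finR1: "finite R1"
    using card_rotations[OF n0] rot_period_props(1)[OF n0] card_ge_0_finite unfolding R1_def by metis
  have cR2: "card R2 = card R1" unfolding R2eq by (rule card_image) (simp add: inj_on_def)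
  have disj: "R1 \<inter> R2 = {}"
  proof (rule ccontr)
    assume "R1 \<inter> R2 \<noteq> {}"
    then obtain i j where e: "rotate i l = rotate j (rev l)" unfolding R1_def R2_def by blast
    define w where "w = rotate (length l - j mod length l) l"
    have rw: "rotate j (rev l) = rev w" by (simp add: rotate_rev w_def)
    obtain t where t: "rotate t w = l" unfolding w_def using rot_back by blast
    have "rev w = rotate i (rotate t w)" using e rw t by simp
    also have "\<dots> = rotate (i + t) w" by (simp add: rotate_rotate)
    finally have "rev w = rotate (i + t) w" .
    moreover have "closed_path a b c d w" unfolding w_def using rotate_closed_path[OF cp] by blast
    ultimately show False using rev_not_rotation by blast
  qed
  have "card (dorbit l) = card (R1 \<union> R2)" by (simp add: dorbit_def R1_def R2_def)
  also have "\<dots> = card R1 + card R2"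
    by (rule card_Un_disjoint) (use finR1 cR2 R2eq disj in auto)
  also have "\<dots> = 2 * rot_period l" using cR2 card_rotations[OF n0] by (simp add: R1_def)
  finally show ?thesis .
qed


section \<open>Loops as representatives of dihedral orbits\<close>

lemma finite_has_least:
  assumes "finite A" "A \<noteq> {}" and r: "trans r" "\<And>x y. (x, y) \<in> r \<or> x = y \<or> (y, x) \<in> r"
  shows "\<exists>m\<in>A. \<forall>y\<in>A. m = y \<or> (m, y) \<in> r"
  using assms(1,2)
proof (induction A rule: finite_ne_induct)
  case (insert x F)
  then obtain m where m: "m \<in> F" "\<forall>y\<in>F. m = y \<or> (m, y) \<in> r" by blast
  show ?case
  proof (cases "(x, m) \<in> r")
    case True
    have "x = y \<or> (x, y) \<in> r" if "y \<in> insert x F" for y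
      using that m(2) True transD[OF r(1), of x m y] by auto
    then have "\<forall>y\<in>insert x F. x = y \<or> (x, y) \<in> r" by blast
    then show ?thesis by blast
  next
    case False
    then have "\<forall>y\<in>insert x F. m = y \<or> (m, y) \<in> r" using m(2) r(2)[of x m] by blast
    then show ?thesis using m(1) by blast
  qed
qed simp

lemma vless_trans: "trans vless"
  by (auto simp: trans_def vless_def)

lemma vless_total: "\<forall>p q. (p, q) \<in> vless \<or> p = q \<or> (q, p) \<in> vless"
  by (auto simp: vless_def prod_eq_iff)

lemma lexord_vless_irrefl: "(u, u) \<notin> lexord vless"
  by (rule lexord_irreflexive) (simp add: vless_def)

lemma lexord_vless_trans: "trans (lexord vless)"
  by (rule lexord_transI[OF vless_trans])

lemma lexord_vless_total: "(u, v) \<in> lexord vless \<or> u = v \<or> (v, u) \<in> lexord vless"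
  by (rule lexord_linear[OF vless_total])

lemma is_loop_iff:
  assumes cp: "closed_path a b c d l"
  shows "is_loop a b c d l \<longleftrightarrow> (\<forall>u\<in>dorbit l. l = u \<or> (l, u) \<in> lexord vless)"
proof
  assume "is_loop a b c d l"
  then have all: "\<forall>k<length l. \<forall>ws\<in>{rotate k l, rotate k (rev l)}. l = ws \<or> (l, ws) \<in> lexord vless"
    unfolding is_loop_def by blast
  have n0: "0 < length l" by (rule closed_path_length[OF cp])
  show "\<forall>u\<in>dorbit l. l = u \<or> (l, u) \<in> lexord vless"
  proof
    fix u assume "u \<in> dorbit l"
    then obtain k where "u = rotate k l \<or> u = rotate k (rev l)" unfolding dorbit_def by blast
    then have "u = rotate (k mod length l) l \<or> u = rotate (k mod length l) (rev l)"
      using rotate_conv_mod[of k l] rotate_conv_mod[of k "rev l"] by simp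
    moreover have "k mod length l < length l" using n0 by simp
    ultimately show "l = u \<or> (l, u) \<in> lexord vless" using all by blast
  qed
next
  assume "\<forall>u\<in>dorbit l. l = u \<or> (l, u) \<in> lexord vless"
  then show "is_loop a b c d l"
    using cp unfolding is_loop_def dorbit_def by blast
qed

lemma loop_closed_path: "l \<in> loops a b c d r \<Longrightarrow> closed_path a b c d l \<and> length l = r"
  by (auto simp: loops_def is_loop_def)

lemma loops_subset: "loops a b c d r \<subseteq> closed_paths a b c d r"
  by (auto simp: closed_paths_def dest: loop_closed_path)

lemma finite_loops: "finite (loops a b c d r)"
  using finite_subset[OF loops_subset finite_closed_paths] .

lemma dorbit_closed_paths: "l \<in> closed_paths a b c d r \<Longrightarrow> dorbit l \<subseteq> closed_paths a b c d r"
  using dorbit_props(1,2)[of a b c d l] by (auto simp: closed_paths_def)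

text \<open>Every closed path lies in the orbit of some loop (the least element of its orbit) ...\<close>
lemma loop_exists:
  assumes vs: "vs \<in> closed_paths a b c d r"
  shows "\<exists>l\<in>loops a b c d r. vs \<in> dorbit l"
proof -
  have fin: "finite (dorbit vs)" by (rule finite_subset[OF dorbit_closed_paths[OF vs] finite_closed_paths])
  obtain m where m: "m \<in> dorbit vs" "\<forall>y\<in>dorbit vs. m = y \<or> (m, y) \<in> lexord vless"
    using finite_has_least[OF fin _ lexord_vless_trans lexord_vless_total] dorbit_self by blast
  have cpv: "closed_path a b c d vs" "length vs = r" using vs by (auto simp: closed_paths_def)
  have cpm: "closed_path a b c d m" "length m = r" using dorbit_props[OF cpv(1) m(1)] cpv by auto
  have "is_loop a b c d m"
    unfolding is_loop_iff[OF cpm(1)] using m dorbit_closed[OF m(1)] by blast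
  then have "m \<in> loops a b c d r" using cpm by (simp add: loops_def)
  moreover have "vs \<in> dorbit m" by (rule dorbit_sym[OF m(1)])
  ultimately show ?thesis by blast
qed

lemma loop_unique:
  assumes l1: "l1 \<in> loops a b c d r" and l2: "l2 \<in> loops a b c d r"
    and v1: "vs \<in> dorbit l1" and v2: "vs \<in> dorbit l2"
  shows "l1 = l2"
proof -
  have c1: "closed_path a b c d l1" "is_loop a b c d l1" using l1 by (auto simp: loops_def is_loop_def)
  have c2: "closed_path a b c d l2" "is_loop a b c d l2" using l2 by (auto simp: loops_def is_loop_def)
  have "l2 \<in> dorbit l1" using dorbit_closed[OF v1] dorbit_sym[OF v2] by blast
  then have A: "l1 = l2 \<or> (l1, l2) \<in> lexord vless" using c1 is_loop_iff by blast
  have "l1 \<in> dorbit l2" using dorbit_closed[OF v2] dorbit_sym[OF v1] by blast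
  then have B: "l2 = l1 \<or> (l2, l1) \<in> lexord vless" using c2 is_loop_iff by blast
  show ?thesis using A B transD[OF lexord_vless_trans, of l1 l2 l1] lexord_vless_irrefl by blast
qed

lemma sum_closed_paths:
  "(\<Sum>vs\<in>closed_paths a b c d r. path_weight x vs) =
   (\<Sum>l\<in>loops a b c d r. of_nat (card (dorbit l)) * path_weight x l)"
proof -
  have union: "closed_paths a b c d r = \<Union> (dorbit ` loops a b c d r)"
  proof
    show "closed_paths a b c d r \<subseteq> \<Union> (dorbit ` loops a b c d r)"
      using loop_exists by blast
    show "\<Union> (dorbit ` loops a b c d r) \<subseteq> closed_paths a b c d r"
      using dorbit_closed_paths loops_subset by blast
  qed
  have "(\<Sum>vs\<in>closed_paths a b c d r. path_weight x vs) =
      (\<Sum>l\<in>loops a b c d r. \<Sum>vs\<in>dorbit l. path_weight x vs)"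
    unfolding union
  proof (rule sum.UNION_disjoint)
    show "finite (loops a b c d r)" by (rule finite_loops)
    show "\<forall>l\<in>loops a b c d r. finite (dorbit l)"
      using finite_subset[OF dorbit_closed_paths finite_closed_paths] loops_subset by blast
    show "\<forall>l1\<in>loops a b c d r. \<forall>l2\<in>loops a b c d r. l1 \<noteq> l2 \<longrightarrow> dorbit l1 \<inter> dorbit l2 = {}"
      using loop_unique by blast
  qed
  also have "\<dots> = (\<Sum>l\<in>loops a b c d r. of_nat (card (dorbit l)) * path_weight x l)"
  proof (rule sum.cong)
    fix l assume l: "l \<in> loops a b c d r"
    have "(\<Sum>vs\<in>dorbit l. path_weight x vs) = (\<Sum>vs\<in>dorbit l. path_weight x l)"
      by (rule sum.cong) (use dorbit_props(3) loop_closed_path[OF l] in auto)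
    then show "(\<Sum>vs\<in>dorbit l. path_weight x vs) = of_nat (card (dorbit l)) * path_weight x l"
      by simp
  qed simp
  finally show ?thesis .
qed

text \<open>An orbit of a loop l of r steps has 2 r / m(l) elements, so it contributes 2 r w(l; x).\<close>
lemma orbit_weight:
  assumes l: "l \<in> loops a b c d r"
  shows "of_nat (card (dorbit l)) * path_weight x l = 2 * of_nat r * lweight l x"
proof -
  have cp: "closed_path a b c d l" and len: "length l = r" using loop_closed_path[OF l] by auto
  have n0: "0 < length l" by (rule closed_path_length[OF cp])
  define q where "q = length l div rot_period l"
  have rq: "length l = rot_period l * q" using rot_period_props(4)[OF n0] by (simp add: q_def)
  have q0: "q \<noteq> 0" using rq n0 by auto
  have "mult l = q" by (simp add: mult_def q_def rot_period_def)
  then have q_lweight: "of_nat q * lweight l x = path_weight x l"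
    using q0 by (simp add: lweight_def edge_prod_def path_weight_def)
  have r_eq: "(of_nat r :: complex) = of_nat (rot_period l) * of_nat q"
    using len rq by (metis of_nat_mult)
  have "2 * of_nat r * lweight l x = 2 * of_nat (rot_period l) * (of_nat q * lweight l x)"
    unfolding r_eq by (simp only: mult.assoc)
  also have "\<dots> = of_nat (card (dorbit l)) * path_weight x l"
    unfolding q_lweight card_dorbit[OF cp] by simp
  finally show ?thesis by simp
qed

lemma sum_path_weights:
  "(\<Sum>vs\<in>closed_paths a b c d r. path_weight x vs) = 2 * of_nat r * f_r a b c d r x"
  unfolding sum_closed_paths f_r_def sum_distrib_left by (rule sum.cong) (simp_all add: orbit_weight)

lemma opnorm_Lam_le:
  "opnorm (Lam a b c d x) (rectD a b c d) \<le> (sqrt 2 + 1) * supnorm (rectE a b c d) x"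
  by (rule opnorm_le) (simp_all add: supnorm_nonneg finite_rectE Lam_apply_norm)

lemma trace_Lam_power:
  assumes "2 \<le> r"
  shows "2 * of_nat r * f_r a b c d r x =
    - (\<Sum>e0\<in>rectD a b c d. (mat_apply (Lam a b c d x) (rectD a b c d) ^^ r) (unit_vec e0) e0)"
proof -
  have "2 * of_nat r * f_r a b c d r x = (\<Sum>vs\<in>closed_paths a b c d r. path_weight x vs)"
    by (rule sum_path_weights[symmetric])
  also have "\<dots> = - (\<Sum>vs\<in>words (rectV a b c d) r. cyc_prod (Lam a b c d x) vs)"
    using sum_cyc_prod_Lam[of r] assms by simp
  also have "\<dots> = - (\<Sum>e0\<in>rectD a b c d. (mat_apply (Lam a b c d x) (rectD a b c d) ^^ r) (unit_vec e0) e0)"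
    using trace_as_cyc_prods[OF Lam_edge_supported rectD_subset finite_rectV assms] by simp
  finally show ?thesis .
qed

text \<open>Every diagonal entry of Lambda(x)^r is at most ||Lambda(x)||^r in modulus, and there
  are at most 4|V| of them.\<close>
lemma trace_Lam_power_le:
  "cmod (\<Sum>e0\<in>rectD a b c d. (mat_apply (Lam a b c d x) (rectD a b c d) ^^ r) (unit_vec e0) e0)
     \<le> 4 * real (card (rectV a b c d)) * ((sqrt 2 + 1) * supnorm (rectE a b c d) x) ^ r"
proof -
  define K where "K = (sqrt 2 + 1) * supnorm (rectE a b c d) x"
  have K0: "0 \<le> K" by (simp add: K_def supnorm_nonneg finite_rectE)
  have "cmod (\<Sum>e0\<in>rectD a b c d. (mat_apply (Lam a b c d x) (rectD a b c d) ^^ r) (unit_vec e0) e0)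
      \<le> (\<Sum>e0\<in>rectD a b c d. K ^ r)"
    by (rule order_trans[OF norm_sum sum_mono], rule iterate_diag_le)
      (simp_all add: finite_rectD K_def Lam_apply_norm supnorm_nonneg finite_rectE)
  also have "\<dots> \<le> real (4 * card (rectV a b c d)) * K ^ r"
    using card_rectD[of a b c d] K0 by (simp add: mult_right_mono)
  finally show ?thesis by (simp add: K_def)
qed

lemma f_r_le:
  assumes r: "1 \<le> r"
  shows "cmod (f_r a b c d r x) \<le> 2 * real (card (rectV a b c d)) / real r
             * (sqrt 2 + 1) ^ r * supnorm (rectE a b c d) x ^ r"
proof (cases "r = 1")
  case True
  then have "closed_paths a b c d r = {}"
    using closed_path_length_ge_2 by (force simp: closed_paths_def)
  then have "2 * of_nat r * f_r a b c d r x = 0" by (simp only: sum_path_weights[symmetric]) simp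
  then have "f_r a b c d r x = 0" using True by simp
  then show ?thesis by (simp add: supnorm_nonneg finite_rectE)
next
  case False
  then have r2: "2 \<le> r" using r by simp
  have "cmod (2 * of_nat r * f_r a b c d r x) =
      cmod (\<Sum>e0\<in>rectD a b c d. (mat_apply (Lam a b c d x) (rectD a b c d) ^^ r) (unit_vec e0) e0)"
    unfolding trace_Lam_power[OF r2] by (rule norm_minus_cancel)
  then have "2 * real r * cmod (f_r a b c d r x) =
      cmod (\<Sum>e0\<in>rectD a b c d. (mat_apply (Lam a b c d x) (rectD a b c d) ^^ r) (unit_vec e0) e0)"
    by (simp only: norm_mult norm_numeral norm_of_nat)
  also have "\<dots> \<le> 4 * real (card (rectV a b c d)) * ((sqrt 2 + 1) * supnorm (rectE a b c d) x) ^ r"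
    by (rule trace_Lam_power_le)
  finally have "2 * real r * cmod (f_r a b c d r x) \<le>
      4 * real (card (rectV a b c d)) * ((sqrt 2 + 1) ^ r * supnorm (rectE a b c d) x ^ r)"
    by (simp only: power_mult_distrib)
  then have "real r * cmod (f_r a b c d r x) \<le>
      2 * real (card (rectV a b c d)) * (sqrt 2 + 1) ^ r * supnorm (rectE a b c d) x ^ r"
    by simp
  moreover have "0 < real r" using r by simp
  ultimately show ?thesis by (simp add: pos_le_divide_eq mult.commute)
qed

theorem mainTheorem4:
  fixes a b c d :: int and x :: "vert set \<Rightarrow> complex"
  assumes "a \<le> b" and "c \<le> d"
  shows "opnorm (Lam a b c d x) (rectD a b c d) \<le> (sqrt 2 + 1) * supnorm (rectE a b c d) x
    \<and> (\<forall>r::nat. r \<ge> 1 \<longrightarrow>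
         cmod (f_r a b c d r x) \<le> 2 * real (card (rectV a b c d)) / real r
             * (sqrt 2 + 1) ^ r * supnorm (rectE a b c d) x ^ r)"
  using opnorm_Lam_le f_r_le by blast

end
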